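(* Let $\mathcal P=\mathcal P(V,R)$ and $\mathcal Q=\mathcal P(W,S)$ be binary quadratic operads over a field $\Bbbk$ with $\dim V,\dim W<\infty$. Let $(e_i)_{i\in I}$ be a basis of $V$, $(f_j)_{j\in J}$ a basis of $W$, and $(e_i^\vee)_{i\in I}$ the dual basis of $V^\vee$. Write the operations of $\mathcal P^!$ as $e_i^\vee=x_1\circ^i x_2$, those of $\mathcal Q$ as $f_j=x_1*_j x_2$, and the generating operations $1_-\otimes e_i\otimes f_j\in\Bbbk_-\otimes V\otimes W$ of $\mathcal P\bullet\mathcal Q$ as $x_1*_{i,j}x_2$. Let $A$ be a vector space with bilinear operations $(\cdot*_{i,j}\cdot)$, $i\in I$, $j\in J$. For a $\mathcal P^!$-algebra $B$ equip $B\otimes A$ with the operations $$(p\otimes a)*_j(q\otimes b)=\sum_{i\in I}(p\circ^i q)\otimes(a*_{i,j}b),\quad p,q\in B,\ a,b\in A,\ j\in J.$$ Then $A$ is a $(\mathcal P\bullet\mathcal Q)$-algebra if and only if for every $\mathcal P^!$-algebra $B$ the space $B\otimes A$ with these operations is a $\mathcal Q$-algebra.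
   Context: A binary quadratic operad $\mathcal P(V,R)$ is generated by an $S_2$-module $V$ of binary operations subject to relations $R\subseteq\mathcal F_V(3)$, $\mathcal F_V$ the free operad. $\Bbbk_-$ is the sign representation of $S_2$, $V^\vee=V^*\otimes\Bbbk_-$, and $\mathcal P^!=\mathcal P(V^\vee,R^\perp)$ is the Koszul dual operad. $\mathcal P\bullet\mathcal Q$ is the Manin black product (Ginzburg–Kapranov): the binary quadratic operad generated by $\Bbbk_-\otimes V\otimes W$ whose relations are the image of $\Bbbk_-\otimes R\otimes S$ under the natural projection $\Bbbk_-\otimes\mathcal F_V(3)\otimes\mathcal F_W(3)\to\mathcal F_{\Bbbk_-\otimes V\otimes W}(3)$ (dual to the embedding of $\mathrm{Ind}_{S_2}^{S_3}((V^\vee\otimes W^\vee)\otimes(V^\vee\otimes W^\vee))$ into $\mathcal F_V(3)^\vee\otimes\mathcal F_W(3)^\vee$). *)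

theory Defs
  imports Complex_Main "HOL-Library.Poly_Mapping"
begin

text \<open>A binary quadratic operad P(V,R) over a field 'k with
 dim V finite is given in coordinates w.r.t. a basis (e_i) of V, indexed by a finite type 'i:
 \<^item> the S2-action on V is the matrix sig, sig i' i = coefficient of e_i' in (12).e_i;
 \<^item> F_V(3) has basis the tree monomials  e_i(e_k(x1,x2),x3), e_i(e_k(x2,x3),x1), e_i(e_k(x3,x1),x2)
   (shapes Sh1, Sh2, Sh3), so elements of F_V(3) are coefficient functions 'i => 'i => shape => 'k;
 \<^item> R is an S3-stable linear subspace of F_V(3).\<close>

datatype shape = Sh1 | Sh2 | Sh3

definition shapes :: "shape set" where "shapes = {Sh1, Sh2, Sh3}"

type_synonym ('i, 'k) tree3 = "'i \<Rightarrow> 'i \<Rightarrow> shape \<Rightarrow> 'k"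

fun tree_eval :: "('i \<Rightarrow> 'a \<Rightarrow> 'a \<Rightarrow> 'a) \<Rightarrow> 'i \<Rightarrow> 'i \<Rightarrow> shape \<Rightarrow> 'a \<Rightarrow> 'a \<Rightarrow> 'a \<Rightarrow> 'a" where
  "tree_eval m i k Sh1 x1 x2 x3 = m i (m k x1 x2) x3"
| "tree_eval m i k Sh2 x1 x2 x3 = m i (m k x2 x3) x1"
| "tree_eval m i k Sh3 x1 x2 x3 = m i (m k x3 x1) x2"

definition eval3 :: "('k \<Rightarrow> 'a::ab_group_add \<Rightarrow> 'a) \<Rightarrow> ('i::finite \<Rightarrow> 'a \<Rightarrow> 'a \<Rightarrow> 'a)
    \<Rightarrow> ('i, 'k) tree3 \<Rightarrow> 'a \<Rightarrow> 'a \<Rightarrow> 'a \<Rightarrow> 'a" where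
  "eval3 scale m r x1 x2 x3 =
     (\<Sum>i\<in>UNIV. \<Sum>k\<in>UNIV. \<Sum>c\<in>shapes. scale (r i k c) (tree_eval m i k c x1 x2 x3))"

definition bilinear_op :: "('k \<Rightarrow> 'a::ab_group_add \<Rightarrow> 'a) \<Rightarrow> ('a \<Rightarrow> 'a \<Rightarrow> 'a) \<Rightarrow> bool" where
  "bilinear_op scale f \<longleftrightarrow>
     (\<forall>x x' y. f (x + x') y = f x y + f x' y) \<and> (\<forall>c x y. f (scale c x) y = scale c (f x y)) \<and>
     (\<forall>x y y'. f x (y + y') = f x y + f x y') \<and> (\<forall>c x y. f x (scale c y) = scale c (f x y))"

text \<open>algebra over P(V,R): bilinear operations m i (one for each basis vector e_i), extended
 linearly to V, which are S2-equivariant ((sig.v)(x,y) = v(y,x)) and satisfy all relations in R\<close>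
definition is_algebra :: "('k::field \<Rightarrow> 'a::ab_group_add \<Rightarrow> 'a) \<Rightarrow> ('i::finite \<Rightarrow> 'i \<Rightarrow> 'k)
    \<Rightarrow> ('i, 'k) tree3 set \<Rightarrow> ('i \<Rightarrow> 'a \<Rightarrow> 'a \<Rightarrow> 'a) \<Rightarrow> bool" where
  "is_algebra scale sig R m \<longleftrightarrow>
     (\<forall>i. bilinear_op scale (m i)) \<and>
     (\<forall>i x y. (\<Sum>i'\<in>UNIV. scale (sig i' i) (m i' x y)) = m i y x) \<and>
     (\<forall>r\<in>R. \<forall>x1 x2 x3. eval3 scale m r x1 x2 x3 = 0)"

definition lin_subspace :: "('i, 'k::field) tree3 set \<Rightarrow> bool" where
  "lin_subspace U \<longleftrightarrow> (\<lambda>i k s. 0) \<in> U \<and> (\<forall>x\<in>U. \<forall>y\<in>U. (\<lambda>i k s. x i k s + y i k s) \<in> U) \<and>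
     (\<forall>c. \<forall>x\<in>U. (\<lambda>i k s. c * x i k s) \<in> U)"

definition lin_span :: "('i, 'k::field) tree3 set \<Rightarrow> ('i, 'k) tree3 set" where
  "lin_span X = \<Inter>{U. lin_subspace U \<and> X \<subseteq> U}"

text \<open>S3-action on F_V(3): the cyclic relabelling x1->x2->x3->x1 and the transposition x1<->x2\<close>
fun shape_prev :: "shape \<Rightarrow> shape" where
  "shape_prev Sh1 = Sh3" | "shape_prev Sh2 = Sh1" | "shape_prev Sh3 = Sh2"

fun shape_swap :: "shape \<Rightarrow> shape" where
  "shape_swap Sh1 = Sh1" | "shape_swap Sh2 = Sh3" | "shape_swap Sh3 = Sh2"

definition rot_act :: "('i, 'k) tree3 \<Rightarrow> ('i, 'k) tree3" where
  "rot_act r = (\<lambda>i k c. r i k (shape_prev c))"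

definition swap_act :: "('i::finite \<Rightarrow> 'i \<Rightarrow> 'k::field) \<Rightarrow> ('i, 'k) tree3 \<Rightarrow> ('i, 'k) tree3" where
  "swap_act sig r = (\<lambda>i k' c. \<Sum>k\<in>UNIV. sig k' k * r i k (shape_swap c))"

definition s2_module :: "('i::finite \<Rightarrow> 'i \<Rightarrow> 'k::field) \<Rightarrow> bool" where
  "s2_module sig \<longleftrightarrow> (\<forall>i i''. (\<Sum>i'\<in>UNIV. sig i'' i' * sig i' i) = (if i'' = i then 1 else 0))"

definition bin_quad_operad :: "('i::finite \<Rightarrow> 'i \<Rightarrow> 'k::field) \<Rightarrow> ('i, 'k) tree3 set \<Rightarrow> bool" where
  "bin_quad_operad sig R \<longleftrightarrow> s2_module sig \<and> lin_subspace R \<and>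
     (\<forall>r\<in>R. rot_act r \<in> R \<and> swap_act sig r \<in> R)"

text \<open>Koszul dual: V^dual = V^* (x) sgn in the dual basis, and R^perp for the pairing
 <e^v_i(e^v_k(..)) , e_i'(e_k'(..))> = delta delta on trees of the same shape\<close>
definition dual_gen :: "('i \<Rightarrow> 'i \<Rightarrow> 'k::field) \<Rightarrow> ('i \<Rightarrow> 'i \<Rightarrow> 'k)" where
  "dual_gen sig = (\<lambda>i' i. - sig i i')"

definition orth :: "('i::finite, 'k::field) tree3 set \<Rightarrow> ('i, 'k) tree3 set" where
  "orth R = {r'. \<forall>r\<in>R. (\<Sum>i\<in>UNIV. \<Sum>k\<in>UNIV. \<Sum>c\<in>shapes. r' i k c * r i k c) = 0}"

text \<open>Manin black product: generators k_- (x) V (x) W with basis 1_- (x) e_i (x) f_j, relations the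
 image of k_- (x) R (x) S under the projection to F(3)\<close>
definition black_gen :: "('i \<Rightarrow> 'i \<Rightarrow> 'k::field) \<Rightarrow> ('j \<Rightarrow> 'j \<Rightarrow> 'k) \<Rightarrow> ('i \<times> 'j \<Rightarrow> 'i \<times> 'j \<Rightarrow> 'k)" where
  "black_gen sigV sigW = (\<lambda>(i', j') (i, j). - (sigV i' i * sigW j' j))"

definition black_rel :: "('i, 'k::field) tree3 set \<Rightarrow> ('j, 'k) tree3 set \<Rightarrow> ('i \<times> 'j, 'k) tree3 set" where
  "black_rel R S = lin_span
     {(\<lambda>(i, j) (k, l) c. r i k c * s j l c) | r s. r \<in> R \<and> s \<in> S}"

text \<open>Vector spaces with a basis indexed by a type 'y are 'y =>_0 'k.  For B = 'y =>_0 'k and A any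
 vector space, B (x) A is canonically 'y =>_0 A  (p (x) a  |->  (y |-> p(y) a)).\<close>
definition fs_scale :: "'k::field \<Rightarrow> ('y \<Rightarrow>\<^sub>0 'k) \<Rightarrow> ('y \<Rightarrow>\<^sub>0 'k)" where
  "fs_scale c p = Poly_Mapping.map (\<lambda>v. c * v) p"

definition tensor_scale :: "('k \<Rightarrow> 'a::ab_group_add \<Rightarrow> 'a) \<Rightarrow> 'k \<Rightarrow> ('y \<Rightarrow>\<^sub>0 'a) \<Rightarrow> ('y \<Rightarrow>\<^sub>0 'a)" where
  "tensor_scale scale c T = Poly_Mapping.map (scale c) T"

definition tens :: "('k::zero \<Rightarrow> 'a::ab_group_add \<Rightarrow> 'a) \<Rightarrow> ('y \<Rightarrow>\<^sub>0 'k) \<Rightarrow> 'a \<Rightarrow> ('y \<Rightarrow>\<^sub>0 'a)" where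
  "tens scale p a = Poly_Mapping.map (\<lambda>c. scale c a) p"

definition tensor_ops :: "('k::field \<Rightarrow> 'a::ab_group_add \<Rightarrow> 'a)
    \<Rightarrow> ('i::finite \<Rightarrow> ('y \<Rightarrow>\<^sub>0 'k) \<Rightarrow> ('y \<Rightarrow>\<^sub>0 'k) \<Rightarrow> ('y \<Rightarrow>\<^sub>0 'k))
    \<Rightarrow> ('i \<times> 'j \<Rightarrow> 'a \<Rightarrow> 'a \<Rightarrow> 'a) \<Rightarrow> 'j \<Rightarrow> ('y \<Rightarrow>\<^sub>0 'a) \<Rightarrow> ('y \<Rightarrow>\<^sub>0 'a) \<Rightarrow> ('y \<Rightarrow>\<^sub>0 'a)" where
  "tensor_ops scale nu mu j T T' =
     (\<Sum>y1\<in>Poly_Mapping.keys T. \<Sum>y2\<in>Poly_Mapping.keys T'. \<Sum>i\<in>UNIV.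
        tens scale (nu i (Poly_Mapping.single y1 1) (Poly_Mapping.single y2 1))
                   (mu (i, j) (Poly_Mapping.lookup T y1) (Poly_Mapping.lookup T' y2)))"

end

theory Submission
  imports Defs "HOL-Library.Function_Algebras" "HOL-Library.Countable"
begin

text \<open>
  Let B be a P^!-algebra with basis (b_y). The y-th coordinates of the tree monomials
  of P^! evaluated at three basis vectors form an element of F_V(3) that pairs to zero
  with R^\<bottom>, hence lies in R = (R^\<bottom>)^\<bottom>. Evaluating a relation s of Q
  on pure tensors of B \<otimes> A therefore yields, coordinatewise, the relation of P \<bullet> Q
  built from that element and s, evaluated in A; by multilinearity B \<otimes> A is a Q-algebra
  whenever A is a (P \<bullet> Q)-algebra. Equivariance is a computation using that the
  S_2-action on V is an involution.

  Conversely, each r \<in> R is detected by a probe P^!-algebra B_r spanned by generators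
  x_0, x_1, x_2, quadratic monomials in them and a top element, in which every tree
  monomial evaluated at (x_0, x_1, x_2) is its r-coefficient times the top element.
  The relations R^\<bottom> hold in B_r since they are orthogonal to r and the triples on which
  they vanish form an S_3-stable set. The top coordinate of a relation s of Q in
  B_r \<otimes> A is the relation r \<otimes> s of P \<bullet> Q in A, and the coordinates of the
  Q-equivariance of B_0 \<otimes> A at the quadratic monomials give the equivariance of A.
\<close>

context
  fixes scale :: "'k \<Rightarrow> 'a::ab_group_add \<Rightarrow> 'a" and f :: "'a \<Rightarrow> 'a \<Rightarrow> 'a"
  assumes bil: "bilinear_op scale f"
begin

lemma bilinear_op_add_left: "f (x + x') y = f x y + f x' y"
  using bil unfolding bilinear_op_def by blast

lemma bilinear_op_add_right: "f x (y + y') = f x y + f x y'"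
  using bil unfolding bilinear_op_def by blast

lemma bilinear_op_scale_left: "f (scale c x) y = scale c (f x y)"
  using bil unfolding bilinear_op_def by blast

lemma bilinear_op_scale_right: "f x (scale c y) = scale c (f x y)"
  using bil unfolding bilinear_op_def by blast

lemma bilinear_op_zero_left: "f 0 y = 0"
  using bilinear_op_add_left[of 0 0 y] by simp

lemma bilinear_op_zero_right: "f x 0 = 0"
  using bilinear_op_add_right[of x 0 0] by simp

lemma bilinear_op_sum_left: "f (\<Sum>x\<in>A. g x) y = (\<Sum>x\<in>A. f (g x) y)"
  by (induction A rule: infinite_finite_induct)
    (simp_all add: bilinear_op_zero_left bilinear_op_add_left)

lemma bilinear_op_sum_right: "f y (\<Sum>x\<in>A. g x) = (\<Sum>x\<in>A. f y (g x))"
  by (induction A rule: infinite_finite_induct)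
    (simp_all add: bilinear_op_zero_right bilinear_op_add_right)

end

lemma additive_sum:
  fixes f :: "'b::comm_monoid_add \<Rightarrow> 'c::cancel_comm_monoid_add"
  assumes "\<And>x y. f (x + y) = f x + f y"
  shows "f (\<Sum>a\<in>A. g a) = (\<Sum>a\<in>A. f (g a))"
proof -
  have "f 0 = 0" using assms[of 0 0] by simp
  then show ?thesis by (induction A rule: infinite_finite_induct) (simp_all add: assms)
qed

lemma sum_rotate3: "(\<Sum>a\<in>A. \<Sum>b\<in>B. \<Sum>c\<in>C. f a b c) = (\<Sum>c\<in>C. \<Sum>a\<in>A. \<Sum>b\<in>B. f a b c)"
proof -
  have "(\<Sum>a\<in>A. \<Sum>b\<in>B. \<Sum>c\<in>C. f a b c) = (\<Sum>a\<in>A. \<Sum>c\<in>C. \<Sum>b\<in>B. f a b c)"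
    by (intro sum.cong refl) (rule sum.swap)
  also have "\<dots> = (\<Sum>c\<in>C. \<Sum>a\<in>A. \<Sum>b\<in>B. f a b c)"
    by (rule sum.swap)
  finally show ?thesis .
qed

lemma sum_reverse3: "(\<Sum>a\<in>A. \<Sum>b\<in>B. \<Sum>c\<in>C. f a b c) = (\<Sum>c\<in>C. \<Sum>b\<in>B. \<Sum>a\<in>A. f a b c)"
  by (subst sum_rotate3) (intro sum.cong refl, rule sum.swap)

lemma sum_fun_apply: "(\<Sum>a\<in>A. f a) x = (\<Sum>a\<in>A. f a x)"
  by (induction A rule: infinite_finite_induct) simp_all

lemma sum_UNIV_prod: "(\<Sum>p\<in>UNIV. g p) = (\<Sum>i\<in>UNIV. \<Sum>j\<in>UNIV. g (i, j))"
  by (subst UNIV_Times_UNIV[symmetric]) (simp add: sum.cartesian_product)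

lemma shapes_UNIV: "shapes = UNIV"
  unfolding shapes_def using shape.exhaust by blast

instance shape :: finite
  by standard (simp add: shapes_UNIV[symmetric] shapes_def)

lemma sum_shapes: "(\<Sum>c\<in>shapes. f c) = f Sh1 + f Sh2 + f Sh3"
  by (simp add: shapes_def add_ac)

context
  fixes scale :: "'k::field \<Rightarrow> 'a::ab_group_add \<Rightarrow> 'a" and m :: "'i::finite \<Rightarrow> 'a \<Rightarrow> 'a \<Rightarrow> 'a"
  assumes vs: "vector_space scale" and bil: "\<forall>i. bilinear_op scale (m i)"
begin

interpretation V: vector_space scale by (rule vs)

lemmas bil_rules = bilinear_op_add_left[OF bil[rule_format]] bilinear_op_add_right[OF bil[rule_format]]
  bilinear_op_scale_left[OF bil[rule_format]] bilinear_op_scale_right[OF bil[rule_format]]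

lemma tree_eval_add:
  "tree_eval m i k c (x + x') y z = tree_eval m i k c x y z + tree_eval m i k c x' y z"
  "tree_eval m i k c x (y + y') z = tree_eval m i k c x y z + tree_eval m i k c x y' z"
  "tree_eval m i k c x y (z + z') = tree_eval m i k c x y z + tree_eval m i k c x y z'"
  by (cases c; simp add: bil_rules)+

lemma tree_eval_scale:
  "tree_eval m i k c (scale a x) y z = scale a (tree_eval m i k c x y z)"
  "tree_eval m i k c x (scale a y) z = scale a (tree_eval m i k c x y z)"
  "tree_eval m i k c x y (scale a z) = scale a (tree_eval m i k c x y z)"
  by (cases c; simp add: bil_rules)+

lemma eval3_add:
  "eval3 scale m r (x + x') y z = eval3 scale m r x y z + eval3 scale m r x' y z"
  "eval3 scale m r x (y + y') z = eval3 scale m r x y z + eval3 scale m r x y' z"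
  "eval3 scale m r x y (z + z') = eval3 scale m r x y z + eval3 scale m r x y z'"
  by (simp_all add: eval3_def tree_eval_add V.scale_right_distrib sum.distrib)

lemma eval3_scale:
  "eval3 scale m r (scale a x) y z = scale a (eval3 scale m r x y z)"
  "eval3 scale m r x (scale a y) z = scale a (eval3 scale m r x y z)"
  "eval3 scale m r x y (scale a z) = scale a (eval3 scale m r x y z)"
  by (simp_all add: eval3_def tree_eval_scale V.scale_sum_right V.scale_scale mult.commute)

end

abbreviation lookup :: "('y \<Rightarrow>\<^sub>0 'b::zero) \<Rightarrow> 'y \<Rightarrow> 'b" where "lookup \<equiv> Poly_Mapping.lookup"
abbreviation keys :: "('y \<Rightarrow>\<^sub>0 'b::zero) \<Rightarrow> 'y set" where "keys \<equiv> Poly_Mapping.keys"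
abbreviation single :: "'y \<Rightarrow> 'b::zero \<Rightarrow> ('y \<Rightarrow>\<^sub>0 'b)" where "single \<equiv> Poly_Mapping.single"
abbreviation unit_vec :: "'y \<Rightarrow> ('y \<Rightarrow>\<^sub>0 'k::field)" where "unit_vec y \<equiv> single y 1"

lemma lookup_map: "f 0 = 0 \<Longrightarrow> lookup (Poly_Mapping.map f p) k = f (lookup p k)"
  by transfer (simp add: when_def)

lemma lookup_fs_scale [simp]: "lookup (fs_scale c p) k = c * lookup p k"
  by (simp add: fs_scale_def lookup_map)

lemma fs_scale_unit_vec: "fs_scale c (unit_vec y) = single y c"
  by (rule poly_mapping_eqI) (simp add: lookup_single when_def)

lemma keys_fs_scale: "keys (fs_scale c p) \<subseteq> keys p"
  by (auto simp: in_keys_iff)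

lemma vector_space_fs_scale: "vector_space (fs_scale :: 'k::field \<Rightarrow> ('y \<Rightarrow>\<^sub>0 'k) \<Rightarrow> _)"
  by unfold_locales (simp_all add: poly_mapping_eq_iff fun_eq_iff lookup_add algebra_simps)

interpretation FS: vector_space "fs_scale :: 'k::field \<Rightarrow> ('y \<Rightarrow>\<^sub>0 'k) \<Rightarrow> _"
  by (rule vector_space_fs_scale)

lemma sum_singles: "(\<Sum>y\<in>keys T. single y (lookup T y)) = T"
proof (rule poly_mapping_eqI)
  fix k
  have "(\<Sum>y\<in>keys T. lookup (single y (lookup T y)) k) = (\<Sum>y\<in>keys T. if y = k then lookup T k else 0)"
    by (rule sum.cong) (auto simp: lookup_single)
  then show "lookup (\<Sum>y\<in>keys T. single y (lookup T y)) k = lookup T k"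
    by (auto simp: lookup_sum in_keys_iff)
qed

lemma additive_eq_0_if_zero_on_singles:
  fixes f :: "('y \<Rightarrow>\<^sub>0 'b::comm_monoid_add) \<Rightarrow> 'c::cancel_comm_monoid_add"
  assumes "\<And>x x'. f (x + x') = f x + f x'" and "\<And>y b. f (single y b) = 0"
  shows "f T = 0"
proof -
  have "f T = f (\<Sum>y\<in>keys T. single y (lookup T y))"
    by (simp only: sum_singles)
  also have "\<dots> = (\<Sum>y\<in>keys T. f (single y (lookup T y)))"
    by (rule additive_sum[of f, OF assms(1)])
  finally show ?thesis by (simp add: assms(2))
qed

lemma eval3_eq_0_if_zero_on_singles:
  fixes scale :: "'k::field \<Rightarrow> ('y \<Rightarrow>\<^sub>0 'b::ab_group_add) \<Rightarrow> ('y \<Rightarrow>\<^sub>0 'b)"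
    and m :: "'i::finite \<Rightarrow> ('y \<Rightarrow>\<^sub>0 'b) \<Rightarrow> ('y \<Rightarrow>\<^sub>0 'b) \<Rightarrow> ('y \<Rightarrow>\<^sub>0 'b)"
  assumes vs: "vector_space scale" and bil: "\<forall>i. bilinear_op scale (m i)"
    and zero: "\<And>y1 y2 y3 b1 b2 b3. eval3 scale m r (single y1 b1) (single y2 b2) (single y3 b3) = 0"
  shows "eval3 scale m r T1 T2 T3 = 0"
proof -
  note add = eval3_add[OF vs bil]
  have 3: "eval3 scale m r (single y1 b1) (single y2 b2) T = 0" for y1 b1 y2 b2 T
    by (rule additive_eq_0_if_zero_on_singles[where f = "eval3 scale m r (single y1 b1) (single y2 b2)"])
      (rule add(3), rule zero)
  have 2: "eval3 scale m r (single y1 b1) T T' = 0" for y1 b1 T T'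
    by (rule additive_eq_0_if_zero_on_singles[where f = "\<lambda>T. eval3 scale m r (single y1 b1) T T'"])
      (rule add(2), rule 3)
  show ?thesis
    by (rule additive_eq_0_if_zero_on_singles[where f = "\<lambda>T. eval3 scale m r T T2 T3"])
      (rule add(1), rule 2)
qed

lemma eval3_eq_0_if_zero_on_basis:
  fixes m :: "'i::finite \<Rightarrow> ('y \<Rightarrow>\<^sub>0 'k::field) \<Rightarrow> ('y \<Rightarrow>\<^sub>0 'k) \<Rightarrow> ('y \<Rightarrow>\<^sub>0 'k)"
  assumes bil: "\<forall>i. bilinear_op fs_scale (m i)"
    and zero: "\<And>y1 y2 y3. eval3 fs_scale m r (unit_vec y1) (unit_vec y2) (unit_vec y3) = 0"
  shows "eval3 fs_scale m r p q s = 0"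
  using vector_space_fs_scale bil
proof (rule eval3_eq_0_if_zero_on_singles)
  fix y1 y2 y3 and b1 b2 b3 :: 'k
  have "eval3 fs_scale m r (single y1 b1) (single y2 b2) (single y3 b3)
      = eval3 fs_scale m r (fs_scale b1 (unit_vec y1)) (fs_scale b2 (unit_vec y2)) (fs_scale b3 (unit_vec y3))"
    by (simp only: fs_scale_unit_vec)
  also have "\<dots> = fs_scale b3 (fs_scale b2 (fs_scale b1 (eval3 fs_scale m r (unit_vec y1) (unit_vec y2) (unit_vec y3))))"
    by (simp only: eval3_scale[OF vector_space_fs_scale bil])
  finally show "eval3 fs_scale m r (single y1 b1) (single y2 b2) (single y3 b3) = 0"
    by (simp add: zero)
qed

definition bilinear_ext :: "('y \<Rightarrow> 'y \<Rightarrow> ('y \<Rightarrow>\<^sub>0 'k::field)) \<Rightarrow> ('y \<Rightarrow>\<^sub>0 'k) \<Rightarrow> ('y \<Rightarrow>\<^sub>0 'k) \<Rightarrow> ('y \<Rightarrow>\<^sub>0 'k)" where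
  "bilinear_ext M p q = (\<Sum>y1\<in>keys p. \<Sum>y2\<in>keys q. fs_scale (lookup p y1 * lookup q y2) (M y1 y2))"

lemma bilinear_ext_over_supersets:
  assumes "finite K1" "keys p \<subseteq> K1" "finite K2" "keys q \<subseteq> K2"
  shows "bilinear_ext M p q = (\<Sum>y1\<in>K1. \<Sum>y2\<in>K2. fs_scale (lookup p y1 * lookup q y2) (M y1 y2))"
  unfolding bilinear_ext_def
  by (intro sum.mono_neutral_left sum.mono_neutral_cong_left sum.cong) (use assms in \<open>auto simp: in_keys_iff\<close>)

lemma bilinear_ext_unit_vec [simp]:
  "bilinear_ext M (unit_vec a) (unit_vec b) = M a b"
  by (simp add: bilinear_ext_def)

lemma bilinear_op_bilinear_ext:
  fixes M :: "'y \<Rightarrow> 'y \<Rightarrow> ('y \<Rightarrow>\<^sub>0 'k::field)"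
  shows "bilinear_op fs_scale (bilinear_ext M)"
  unfolding bilinear_op_def
proof (intro conjI allI)
  fix x x' y :: "'y \<Rightarrow>\<^sub>0 'k" and c :: 'k
  show "bilinear_ext M (x + x') y = bilinear_ext M x y + bilinear_ext M x' y"
    using keys_add[of x x']
    by (subst (1 2 3) bilinear_ext_over_supersets[of "keys x \<union> keys x'" _ "keys y"])
      (auto simp: lookup_add distrib_right FS.scale_left_distrib sum.distrib)
  show "bilinear_ext M (fs_scale c x) y = fs_scale c (bilinear_ext M x y)"
    by (subst (1 2) bilinear_ext_over_supersets[of "keys x" _ "keys y"])
      (auto simp: keys_fs_scale FS.scale_sum_right mult.assoc)
  show "bilinear_ext M y (x + x') = bilinear_ext M y x + bilinear_ext M y x'"
    using keys_add[of x x']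
    by (subst (1 2 3) bilinear_ext_over_supersets[of "keys y" _ "keys x \<union> keys x'"])
      (auto simp: lookup_add distrib_left FS.scale_left_distrib sum.distrib)
  show "bilinear_ext M y (fs_scale c x) = fs_scale c (bilinear_ext M y x)"
    by (subst (1 2) bilinear_ext_over_supersets[of "keys y" _ "keys x"])
      (auto simp: keys_fs_scale FS.scale_sum_right mult_ac)
qed

lemma bilinear_op_eq_bilinear_ext:
  fixes f :: "('y \<Rightarrow>\<^sub>0 'k::field) \<Rightarrow> ('y \<Rightarrow>\<^sub>0 'k) \<Rightarrow> ('y \<Rightarrow>\<^sub>0 'k)"
  assumes "bilinear_op fs_scale f"
  shows "f p q = bilinear_ext (\<lambda>y1 y2. f (unit_vec y1) (unit_vec y2)) p q"
proof -
  have expand: "p = (\<Sum>y\<in>keys p. fs_scale (lookup p y) (unit_vec y))" for p :: "'y \<Rightarrow>\<^sub>0 'k"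
    by (simp add: fs_scale_unit_vec sum_singles)
  show ?thesis
    by (subst expand[of p], subst expand[of q])
      (simp add: bilinear_op_sum_left[OF assms] bilinear_op_sum_right[OF assms]
        bilinear_op_scale_left[OF assms] bilinear_op_scale_right[OF assms]
        bilinear_ext_def FS.scale_sum_right mult.commute sum.swap[where B = "keys q"])
qed

lemma bilinear_ext_equivariant:
  assumes "\<And>a b. (\<Sum>i'\<in>UNIV. fs_scale (D i' i) (M i' a b)) = M i b a"
  shows "(\<Sum>i'\<in>UNIV. fs_scale (D i' i) (bilinear_ext (M i') p q)) = bilinear_ext (M i) q p"
proof -
  have "(\<Sum>i'\<in>UNIV. fs_scale (D i' i) (bilinear_ext (M i') p q))
      = (\<Sum>y1\<in>keys p. \<Sum>y2\<in>keys q. fs_scale (lookup p y1 * lookup q y2) (\<Sum>i'\<in>UNIV. fs_scale (D i' i) (M i' y1 y2)))"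
    unfolding bilinear_ext_def FS.scale_sum_right FS.scale_scale
    by (subst sum_rotate3[symmetric]) (simp add: mult.commute)
  also have "\<dots> = bilinear_ext (M i) q p"
    unfolding assms bilinear_ext_def by (subst sum.swap) (simp add: mult.commute)
  finally show ?thesis .
qed

section \<open>The orthogonal complement of the relations\<close>

lemma (in vector_space) functional_separating_point:
  assumes "subspace R" and "v \<notin> R"
  obtains g where "Vector_Spaces.linear scale (*) g" and "g v = 1" and "\<And>r. r \<in> R \<Longrightarrow> g r = 0"
proof -
  interpret K: vector_space "(*) :: 'a \<Rightarrow> 'a \<Rightarrow> 'a"
    by unfold_locales (simp_all add: algebra_simps)
  interpret P: vector_space_pair scale "(*) :: 'a \<Rightarrow> 'a \<Rightarrow> 'a" ..
  obtain B where B: "B \<subseteq> R" "independent B" "R \<subseteq> span B" by (rule basis_exists)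
  have span_B: "span B = R" using span_subspace[OF B(1,3) assms(1)] .
  have "independent (insert v B)" using independent_insertI assms(2) span_B B(2) by auto
  then obtain g where g: "Vector_Spaces.linear scale (*) g"
      and g_basis: "\<forall>x\<in>insert v B. g x = (if x = v then 1 else 0)"
    using P.linear_independent_extend[of "insert v B" "\<lambda>x. if x = v then 1 else 0"] by blast
  have "g x = 0" if "x \<in> B" for x
    using g_basis that B(1) assms(2) by auto
  then have "g r = 0" if "r \<in> R" for r
    using P.linear_eq_0_on_span[OF g, of B r] that span_B by auto
  with g g_basis show ?thesis using that by auto
qed

definition tree3_scale :: "'k::field \<Rightarrow> ('i, 'k) tree3 \<Rightarrow> ('i, 'k) tree3" where
  "tree3_scale c r = (\<lambda>i k s. c * r i k s)"

lemma vector_space_tree3_scale: "vector_space (tree3_scale :: 'k::field \<Rightarrow> ('i, 'k) tree3 \<Rightarrow> _)"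
  by unfold_locales (auto simp: tree3_scale_def fun_eq_iff algebra_simps)

interpretation T3: vector_space "tree3_scale :: 'k::field \<Rightarrow> ('i, 'k) tree3 \<Rightarrow> _"
  by (rule vector_space_tree3_scale)

lemma subspace_if_lin_subspace: "lin_subspace R \<Longrightarrow> T3.subspace R"
  unfolding lin_subspace_def T3.subspace_def by (simp add: tree3_scale_def zero_fun_def plus_fun_def)

definition tree3_pairing :: "('i::finite, 'k::field) tree3 \<Rightarrow> ('i, 'k) tree3 \<Rightarrow> 'k" where
  "tree3_pairing u r = (\<Sum>i\<in>UNIV. \<Sum>k\<in>UNIV. \<Sum>c\<in>shapes. u i k c * r i k c)"

lemma orth_eq: "orth R = {u. \<forall>r\<in>R. tree3_pairing u r = 0}"
  by (simp add: orth_def tree3_pairing_def)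

lemma tree3_pairing_commute: "tree3_pairing u r = tree3_pairing r u"
  by (simp add: tree3_pairing_def mult.commute)

definition tree3_unit :: "'i \<Rightarrow> 'i \<Rightarrow> shape \<Rightarrow> ('i, 'k::field) tree3" where
  "tree3_unit i k c = (\<lambda>i' k' c'. if i' = i \<and> k' = k \<and> c' = c then 1 else 0)"

lemma tree3_expansion:
  fixes r :: "('i::finite, 'k::field) tree3"
  shows "r = (\<Sum>i\<in>UNIV. \<Sum>k\<in>UNIV. \<Sum>c\<in>shapes. tree3_scale (r i k c) (tree3_unit i k c))"
proof (intro ext)
  fix i' k' c'
  have "(\<Sum>i\<in>UNIV. \<Sum>k\<in>UNIV. \<Sum>c\<in>shapes. tree3_scale (r i k c) (tree3_unit i k c)) i' k' c'
      = (\<Sum>i\<in>UNIV. \<Sum>k\<in>UNIV. \<Sum>c\<in>shapes. r i k c * tree3_unit i k c i' k' c')"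
    by (simp add: sum_fun_apply tree3_scale_def)
  also have "\<dots> = (\<Sum>i\<in>UNIV. \<Sum>k\<in>UNIV. if i' = i \<and> k' = k then r i k c' else 0)"
  proof (intro sum.cong refl)
    fix i k
    show "(\<Sum>c\<in>shapes. r i k c * tree3_unit i k c i' k' c') = (if i' = i \<and> k' = k then r i k c' else 0)"
      by (cases "i' = i \<and> k' = k")
        (auto simp: tree3_unit_def shapes_UNIV if_distrib[of "\<lambda>t. _ * t"] cong: if_cong)
  qed
  also have "\<dots> = (\<Sum>i\<in>UNIV. if i' = i then r i k' c' else 0)"
    by (intro sum.cong refl) auto
  also have "\<dots> = r i' k' c'"
    by simp
  finally show "r i' k' c' = (\<Sum>i\<in>UNIV. \<Sum>k\<in>UNIV. \<Sum>c\<in>shapes. tree3_scale (r i k c) (tree3_unit i k c)) i' k' c'"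
    by simp
qed

lemma linear_functional_tree3_pairing:
  assumes "Vector_Spaces.linear tree3_scale (*) g"
  shows "g r = tree3_pairing r (\<lambda>i k c. g (tree3_unit i k c))"
proof -
  interpret g: Vector_Spaces.linear tree3_scale "(*)" g by (rule assms)
  show ?thesis
    by (subst tree3_expansion) (simp add: g.sum g.scale tree3_pairing_def)
qed

lemma orth_orth_subset:
  fixes R :: "('i::finite, 'k::field) tree3 set"
  assumes "lin_subspace R"
  shows "orth (orth R) \<subseteq> R"
proof
  fix v assume v: "v \<in> orth (orth R)"
  show "v \<in> R"
  proof (rule ccontr)
    assume "v \<notin> R"
    then obtain g where g: "Vector_Spaces.linear tree3_scale (*) g"
        and "g v = 1" and g_R: "\<And>r. r \<in> R \<Longrightarrow> g r = 0"
      using T3.functional_separating_point[OF subspace_if_lin_subspace[OF assms]] by blast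
    define w where "w = (\<lambda>i k c. g (tree3_unit i k c))"
    have w_pairing: "tree3_pairing r w = g r" for r
      unfolding w_def by (rule linear_functional_tree3_pairing[OF g, symmetric])
    have "w \<in> orth R"
      unfolding orth_eq using g_R by (simp add: tree3_pairing_commute[of w] w_pairing)
    then have "tree3_pairing v w = 0" using v by (simp add: orth_eq)
    with \<open>g v = 1\<close> show False by (simp add: w_pairing)
  qed
qed

lemma shape_swap_involution [simp]: "shape_swap (shape_swap c) = c"
  by (cases c) auto

lemma sum_shapes_reindex_swap: "(\<Sum>c\<in>shapes. f c) = (\<Sum>c\<in>shapes. f (shape_swap c))"
  by (simp add: sum_shapes add_ac)

lemma tree3_pairing_rot_act: "tree3_pairing (rot_act u) r = tree3_pairing u (rot_act (rot_act r))"
  by (simp add: tree3_pairing_def rot_act_def sum_shapes add_ac)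

lemma tree3_pairing_swap_act:
  fixes sig :: "'i::finite \<Rightarrow> 'i \<Rightarrow> 'k::field"
  shows "tree3_pairing (swap_act (dual_gen sig) u) r = - tree3_pairing u (swap_act sig r)"
proof -
  have "tree3_pairing (swap_act (dual_gen sig) u) r
      = - (\<Sum>i\<in>UNIV. \<Sum>k\<in>UNIV. \<Sum>c\<in>shapes. \<Sum>k'\<in>UNIV. sig k' k * u i k' (shape_swap c) * r i k c)"
    by (simp add: tree3_pairing_def swap_act_def dual_gen_def sum_distrib_right sum_negf)
  also have "\<dots> = - (\<Sum>i\<in>UNIV. \<Sum>k\<in>UNIV. \<Sum>c\<in>shapes. \<Sum>k'\<in>UNIV. sig k' k * u i k' c * r i k (shape_swap c))"
    by (rule arg_cong[where f = uminus], rule sum.cong[OF refl], rule sum.cong[OF refl])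
      (subst sum_shapes_reindex_swap, simp)
  also have "\<dots> = - (\<Sum>i\<in>UNIV. \<Sum>k'\<in>UNIV. \<Sum>c\<in>shapes. \<Sum>k\<in>UNIV. sig k' k * u i k' c * r i k (shape_swap c))"
    by (rule arg_cong[where f = uminus], rule sum.cong[OF refl]) (rule sum_reverse3)
  also have "\<dots> = - tree3_pairing u (swap_act sig r)"
    by (simp add: tree3_pairing_def swap_act_def sum_distrib_left mult_ac)
  finally show ?thesis .
qed

lemma rot_act_orth:
  assumes "\<forall>r\<in>R. rot_act r \<in> R" and "u \<in> orth R"
  shows "rot_act u \<in> orth R"
  using assms by (simp add: orth_eq tree3_pairing_rot_act)

lemma swap_act_orth:
  fixes sig :: "'i::finite \<Rightarrow> 'i \<Rightarrow> 'k::field"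
  assumes "\<forall>r\<in>R. swap_act sig r \<in> R" and "u \<in> orth R"
  shows "swap_act (dual_gen sig) u \<in> orth R"
  using assms by (simp add: orth_eq tree3_pairing_swap_act)

lemma eval3_rot_act: "eval3 scale m (rot_act r) x1 x2 x3 = eval3 scale m r x2 x3 x1"
  unfolding eval3_def rot_act_def by (simp add: sum_shapes add_ac)

lemma eval3_swap_act:
  fixes scale :: "'k::field \<Rightarrow> 'a::ab_group_add \<Rightarrow> 'a"
    and m :: "'i::finite \<Rightarrow> 'a \<Rightarrow> 'a \<Rightarrow> 'a" and sig :: "'i \<Rightarrow> 'i \<Rightarrow> 'k"
  assumes vs: "vector_space scale" and bil: "\<forall>i. bilinear_op scale (m i)"
    and equivariant: "\<And>k x y. m k y x = (\<Sum>k'\<in>UNIV. scale (sig k' k) (m k' x y))"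
  shows "eval3 scale m (swap_act sig r) x1 x2 x3 = eval3 scale m r x2 x1 x3"
proof -
  interpret V: vector_space scale by (rule vs)
  have inner_swapped: "tree_eval m i k c x2 x1 x3
      = (\<Sum>k'\<in>UNIV. scale (sig k' k) (tree_eval m i k' (shape_swap c) x1 x2 x3))" for i k c
    by (cases c) (simp_all only: tree_eval.simps shape_swap.simps equivariant[of k]
        bilinear_op_sum_left[OF bil[rule_format]] bilinear_op_scale_left[OF bil[rule_format]])
  have "eval3 scale m (swap_act sig r) x1 x2 x3 =
     (\<Sum>i\<in>UNIV. \<Sum>k'\<in>UNIV. \<Sum>c\<in>shapes. \<Sum>k\<in>UNIV. scale (sig k' k * r i k (shape_swap c)) (tree_eval m i k' c x1 x2 x3))"
    unfolding eval3_def swap_act_def by (simp only: V.scale_sum_left)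
  also have "\<dots> = (\<Sum>i\<in>UNIV. \<Sum>k'\<in>UNIV. \<Sum>c\<in>shapes. \<Sum>k\<in>UNIV. scale (sig k' k * r i k c) (tree_eval m i k' (shape_swap c) x1 x2 x3))"
    by (rule sum.cong[OF refl], rule sum.cong[OF refl]) (subst sum_shapes_reindex_swap, simp)
  also have "\<dots> = (\<Sum>i\<in>UNIV. \<Sum>k\<in>UNIV. \<Sum>c\<in>shapes. \<Sum>k'\<in>UNIV. scale (sig k' k * r i k c) (tree_eval m i k' (shape_swap c) x1 x2 x3))"
    by (rule sum.cong[OF refl]) (rule sum_reverse3)
  also have "\<dots> = eval3 scale m r x2 x1 x3"
    unfolding eval3_def inner_swapped by (simp only: V.scale_sum_right V.scale_scale mult.commute)
  finally show ?thesis .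
qed

lemma orth_vanishing_rotate:
  assumes "\<forall>r\<in>R. rot_act r \<in> R" and "\<forall>u\<in>orth R. eval3 scale m u x y z = 0"
  shows "\<forall>u\<in>orth R. eval3 scale m u y z x = 0"
proof
  fix u assume "u \<in> orth R"
  then have "eval3 scale m (rot_act u) x y z = 0"
    using assms(2) rot_act_orth[OF assms(1) \<open>u \<in> orth R\<close>] by blast
  then show "eval3 scale m u y z x = 0" by (simp only: eval3_rot_act)
qed

lemma orth_vanishing_swap:
  fixes scale :: "'k::field \<Rightarrow> 'a::ab_group_add \<Rightarrow> 'a"
    and m :: "'i::finite \<Rightarrow> 'a \<Rightarrow> 'a \<Rightarrow> 'a" and sig :: "'i \<Rightarrow> 'i \<Rightarrow> 'k"
  assumes "vector_space scale" and "\<forall>i. bilinear_op scale (m i)"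
    and "\<And>k x y. m k y x = (\<Sum>k'\<in>UNIV. scale (dual_gen sig k' k) (m k' x y))"
    and "\<forall>r\<in>R. swap_act sig r \<in> R" and "\<forall>u\<in>orth R. eval3 scale m u x y z = 0"
  shows "\<forall>u\<in>orth R. eval3 scale m u y x z = 0"
proof
  fix u assume "u \<in> orth R"
  then have "eval3 scale m (swap_act (dual_gen sig) u) x y z = 0"
    using assms(5) swap_act_orth[OF assms(4) \<open>u \<in> orth R\<close>] by blast
  then show "eval3 scale m u y x z = 0" by (simp only: eval3_swap_act[OF assms(1-3)])
qed

context
  fixes scale :: "'k::field \<Rightarrow> 'a::ab_group_add \<Rightarrow> 'a"
  assumes vs: "vector_space scale"
begin

interpretation V: vector_space scale by (rule vs)

lemma lookup_tensor_scale [simp]: "lookup (tensor_scale scale c T) y = scale c (lookup T y)"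
  by (simp add: tensor_scale_def lookup_map)

lemma lookup_tens [simp]: "lookup (tens scale p a) y = scale (lookup p y) a"
  by (simp add: tens_def lookup_map)

lemma vector_space_tensor_scale: "vector_space (tensor_scale scale :: 'k \<Rightarrow> ('y \<Rightarrow>\<^sub>0 'a) \<Rightarrow> _)"
  by unfold_locales (simp_all add: poly_mapping_eq_iff fun_eq_iff lookup_add
      V.scale_right_distrib V.scale_left_distrib)

lemma keys_tensor_scale: "keys (tensor_scale scale c T) \<subseteq> keys T"
  by (auto simp: in_keys_iff)

lemma keys_tens: "keys (tens scale p a) \<subseteq> keys p"
  by (auto simp: in_keys_iff)

lemma tens_unit_vec: "tens scale (unit_vec y) a = single y a"
  by (rule poly_mapping_eqI) (simp add: lookup_single when_def)

end

context
  fixes scale :: "'k::field \<Rightarrow> 'a::ab_group_add \<Rightarrow> 'a"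
    and mu :: "'i::finite \<times> 'j \<Rightarrow> 'a \<Rightarrow> 'a \<Rightarrow> 'a"
    and nu :: "'i \<Rightarrow> ('y \<Rightarrow>\<^sub>0 'k) \<Rightarrow> ('y \<Rightarrow>\<^sub>0 'k) \<Rightarrow> ('y \<Rightarrow>\<^sub>0 'k)"
  assumes vs: "vector_space scale" and bil_mu: "\<forall>ij. bilinear_op scale (mu ij)"
begin

interpretation V: vector_space scale by (rule vs)

lemmas mu_rules = bilinear_op_add_left[OF bil_mu[rule_format]] bilinear_op_add_right[OF bil_mu[rule_format]]
  bilinear_op_scale_left[OF bil_mu[rule_format]] bilinear_op_scale_right[OF bil_mu[rule_format]]
  bilinear_op_zero_left[OF bil_mu[rule_format]] bilinear_op_zero_right[OF bil_mu[rule_format]]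

lemma lookup_tensor_ops:
  assumes "finite A" "keys T \<subseteq> A" "finite B" "keys T' \<subseteq> B"
  shows "lookup (tensor_ops scale nu mu j T T') h = (\<Sum>y1\<in>A. \<Sum>y2\<in>B. \<Sum>i\<in>UNIV.
           scale (lookup (nu i (unit_vec y1) (unit_vec y2)) h) (mu (i, j) (lookup T y1) (lookup T' y2)))"
  unfolding tensor_ops_def lookup_sum lookup_tens[OF vs]
  by (intro sum.mono_neutral_left sum.mono_neutral_cong_left sum.cong)
    (use assms in \<open>auto simp: in_keys_iff mu_rules\<close>)

lemma bilinear_op_tensor_ops: "bilinear_op (tensor_scale scale) (tensor_ops scale nu mu j)"
  unfolding bilinear_op_def
proof (intro conjI allI; rule poly_mapping_eqI)
  fix x x' y :: "'y \<Rightarrow>\<^sub>0 'a" and c h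
  show "lookup (tensor_ops scale nu mu j (x + x') y) h = lookup (tensor_ops scale nu mu j x y + tensor_ops scale nu mu j x' y) h"
    using keys_add[of x x']
    by (simp only: lookup_add, subst (1 2 3) lookup_tensor_ops[of "keys x \<union> keys x'" _ "keys y"])
      (auto simp: lookup_add mu_rules V.scale_right_distrib sum.distrib)
  show "lookup (tensor_ops scale nu mu j y (x + x')) h = lookup (tensor_ops scale nu mu j y x + tensor_ops scale nu mu j y x') h"
    using keys_add[of x x']
    by (simp only: lookup_add, subst (1 2 3) lookup_tensor_ops[of "keys y" _ "keys x \<union> keys x'"])
      (auto simp: lookup_add mu_rules V.scale_right_distrib sum.distrib)
  show "lookup (tensor_ops scale nu mu j (tensor_scale scale c x) y) h = lookup (tensor_scale scale c (tensor_ops scale nu mu j x y)) h"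
    by (simp only: lookup_tensor_scale[OF vs], subst (1 2) lookup_tensor_ops[of "keys x" _ "keys y"])
      (auto simp: mu_rules V.scale_sum_right mult.commute keys_tensor_scale[OF vs] lookup_tensor_scale[OF vs])
  show "lookup (tensor_ops scale nu mu j y (tensor_scale scale c x)) h = lookup (tensor_scale scale c (tensor_ops scale nu mu j y x)) h"
    by (simp only: lookup_tensor_scale[OF vs], subst (1 2) lookup_tensor_ops[of "keys y" _ "keys x"])
      (auto simp: mu_rules V.scale_sum_right mult.commute keys_tensor_scale[OF vs] lookup_tensor_scale[OF vs])
qed

end

definition black_prod :: "('i, 'k::field) tree3 \<Rightarrow> ('j, 'k) tree3 \<Rightarrow> ('i \<times> 'j, 'k) tree3" where
  "black_prod r s = (\<lambda>(i, j) (k, l) c. r i k c * s j l c)"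

lemma black_prod_in_black_rel: "r \<in> R \<Longrightarrow> s \<in> S \<Longrightarrow> black_prod r s \<in> black_rel R S"
  unfolding black_rel_def lin_span_def black_prod_def by blast

definition tree_coord :: "('i \<Rightarrow> ('y \<Rightarrow>\<^sub>0 'k) \<Rightarrow> ('y \<Rightarrow>\<^sub>0 'k) \<Rightarrow> ('y \<Rightarrow>\<^sub>0 'k::field))
    \<Rightarrow> ('y \<Rightarrow>\<^sub>0 'k) \<Rightarrow> ('y \<Rightarrow>\<^sub>0 'k) \<Rightarrow> ('y \<Rightarrow>\<^sub>0 'k) \<Rightarrow> 'y \<Rightarrow> ('i, 'k) tree3" where
  "tree_coord nu p1 p2 p3 h = (\<lambda>i k c. lookup (tree_eval nu i k c p1 p2 p3) h)"

section \<open>From algebras over the black product to algebras over the tensor product\<close>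

lemma lookup_eval3_fs_scale:
  "lookup (eval3 fs_scale nu u p1 p2 p3) h = tree3_pairing u (tree_coord nu p1 p2 p3 h)"
  by (simp add: eval3_def lookup_sum tree3_pairing_def tree_coord_def)

lemma tree_coord_in_rel:
  assumes "lin_subspace R" and "is_algebra fs_scale (dual_gen sig) (orth R) nu"
  shows "tree_coord nu p1 p2 p3 h \<in> R"
proof -
  have "tree3_pairing (tree_coord nu p1 p2 p3 h) u = 0" if "u \<in> orth R" for u
    using assms(2) that lookup_eval3_fs_scale[of nu u p1 p2 p3 h]
    by (simp add: is_algebra_def tree3_pairing_commute)
  then have "tree_coord nu p1 p2 p3 h \<in> orth (orth R)"
    by (simp add: orth_eq)
  then show ?thesis using orth_orth_subset[OF assms(1)] by blast
qed

lemma biadditive_eq_0_if_zero_on_singles: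
  fixes f :: "('y \<Rightarrow>\<^sub>0 'b::comm_monoid_add) \<Rightarrow> ('y \<Rightarrow>\<^sub>0 'b) \<Rightarrow> 'c::cancel_comm_monoid_add"
  assumes "\<And>x x' y. f (x + x') y = f x y + f x' y" and "\<And>x y y'. f x (y + y') = f x y + f x y'"
    and "\<And>y1 y2 b1 b2. f (single y1 b1) (single y2 b2) = 0"
  shows "f T T' = 0"
proof -
  have zero: "f (single y b) T' = 0" for y b
    by (rule additive_eq_0_if_zero_on_singles[where f = "f (single y b)"]) (rule assms(2), rule assms(3))
  show ?thesis
    by (rule additive_eq_0_if_zero_on_singles[where f = "\<lambda>T. f T T'"]) (rule assms(1), rule zero)
qed

text \<open>Since sigV is an involution, the sign-twisted dual action on the coefficients al cancels
  the V-part of the action on \<Bbbk>_- \<otimes> V \<otimes> W, leaving the action of W.\<close>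

lemma black_gen_dual_gen_exchange:
  fixes scale :: "'k::field \<Rightarrow> 'a::ab_group_add \<Rightarrow> 'a"
    and sigV :: "'i::finite \<Rightarrow> 'i \<Rightarrow> 'k" and sigW :: "'j::finite \<Rightarrow> 'j \<Rightarrow> 'k" and M :: "'i \<times> 'j \<Rightarrow> 'a"
  assumes vs: "vector_space scale" and s2: "s2_module sigV"
  shows "(\<Sum>j'\<in>UNIV. scale (sigW j' j) (\<Sum>i\<in>UNIV. scale (al i) (M (i, j'))))
       = (\<Sum>i\<in>UNIV. scale (\<Sum>i'\<in>UNIV. dual_gen sigV i' i * al i')
            (\<Sum>p\<in>UNIV. scale (black_gen sigV sigW p (i, j)) (M p)))"
proof -
  interpret V: vector_space scale by (rule vs)
  have inverse: "(\<Sum>i\<in>UNIV. sigV i'' i * sigV i i') = (if i'' = i' then 1 else 0)" for i'' i'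
    using s2 unfolding s2_module_def by blast
  have "(\<Sum>i\<in>UNIV. scale (\<Sum>i'\<in>UNIV. dual_gen sigV i' i * al i')
            (\<Sum>p\<in>UNIV. scale (black_gen sigV sigW p (i, j)) (M p)))
      = (\<Sum>i\<in>UNIV. \<Sum>i'\<in>UNIV. \<Sum>i''\<in>UNIV. \<Sum>j'\<in>UNIV.
           scale ((sigV i'' i * sigV i i') * (al i' * sigW j' j)) (M (i'', j')))"
    by (simp only: V.scale_sum_left, simp only: V.scale_sum_right V.scale_scale sum_UNIV_prod)
      (simp add: black_gen_def dual_gen_def mult_ac)
  also have "\<dots> = (\<Sum>i'\<in>UNIV. \<Sum>i''\<in>UNIV. \<Sum>j'\<in>UNIV. \<Sum>i\<in>UNIV.
           scale ((sigV i'' i * sigV i i') * (al i' * sigW j' j)) (M (i'', j')))"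
    by (subst sum.swap) (rule sum.cong[OF refl], rule sum_rotate3[symmetric])
  also have "\<dots> = (\<Sum>i'\<in>UNIV. \<Sum>i''\<in>UNIV. \<Sum>j'\<in>UNIV.
           scale ((if i'' = i' then 1 else 0) * (al i' * sigW j' j)) (M (i'', j')))"
    by (simp only: V.scale_sum_left[symmetric] sum_distrib_right[symmetric] inverse)
  also have "\<dots> = (\<Sum>i'\<in>UNIV. \<Sum>i''\<in>UNIV. if i'' = i' then \<Sum>j'\<in>UNIV. scale (al i' * sigW j' j) (M (i', j')) else 0)"
    by (rule sum.cong[OF refl], rule sum.cong[OF refl]) simp
  also have "\<dots> = (\<Sum>i'\<in>UNIV. \<Sum>j'\<in>UNIV. scale (al i' * sigW j' j) (M (i', j')))"
    by simp
  also have "\<dots> = (\<Sum>j'\<in>UNIV. scale (sigW j' j) (\<Sum>i\<in>UNIV. scale (al i) (M (i, j'))))"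
    by (subst sum.swap) (simp add: V.scale_sum_right mult.commute)
  finally show ?thesis by simp
qed

context
  fixes scale :: "'k::field \<Rightarrow> 'a::ab_group_add \<Rightarrow> 'a"
    and mu :: "'i::finite \<times> 'j::finite \<Rightarrow> 'a \<Rightarrow> 'a \<Rightarrow> 'a"
    and nu :: "'i \<Rightarrow> ('y \<Rightarrow>\<^sub>0 'k) \<Rightarrow> ('y \<Rightarrow>\<^sub>0 'k) \<Rightarrow> ('y \<Rightarrow>\<^sub>0 'k)"
  assumes vs: "vector_space scale" and bil_mu: "\<forall>ij. bilinear_op scale (mu ij)"
    and bil_nu: "\<forall>i. bilinear_op fs_scale (nu i)"
begin

interpretation V: vector_space scale by (rule vs)
interpretation TS: vector_space "tensor_scale scale :: 'k \<Rightarrow> ('y \<Rightarrow>\<^sub>0 'a) \<Rightarrow> _"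
  by (rule vector_space_tensor_scale[OF vs])

lemma lookup_tensor_ops_tens:
  "lookup (tensor_ops scale nu mu j (tens scale p a) (tens scale q b)) h
     = (\<Sum>i\<in>UNIV. scale (lookup (nu i p q) h) (mu (i, j) a b))"
proof -
  have "lookup (tensor_ops scale nu mu j (tens scale p a) (tens scale q b)) h
      = (\<Sum>y1\<in>keys p. \<Sum>y2\<in>keys q. \<Sum>i\<in>UNIV.
           scale (lookup p y1 * lookup q y2 * lookup (nu i (unit_vec y1) (unit_vec y2)) h) (mu (i, j) a b))"
    by (subst lookup_tensor_ops[OF vs bil_mu, where A = "keys p" and B = "keys q"])
      (simp_all add: keys_tens[OF vs] lookup_tens[OF vs] mu_rules[OF vs bil_mu] mult_ac)
  also have "\<dots> = (\<Sum>i\<in>UNIV. \<Sum>y1\<in>keys p. \<Sum>y2\<in>keys q.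
           scale (lookup p y1 * lookup q y2 * lookup (nu i (unit_vec y1) (unit_vec y2)) h) (mu (i, j) a b))"
    by (rule sum_rotate3)
  also have "\<dots> = (\<Sum>i\<in>UNIV. scale (lookup (nu i p q) h) (mu (i, j) a b))"
    by (simp add: bilinear_op_eq_bilinear_ext[OF bil_nu[rule_format], of _ p q]
        bilinear_ext_def lookup_sum V.scale_sum_left)
  finally show ?thesis .
qed

lemma tensor_ops_tens:
  "tensor_ops scale nu mu j (tens scale p a) (tens scale q b) = (\<Sum>i\<in>UNIV. tens scale (nu i p q) (mu (i, j) a b))"
  by (rule poly_mapping_eqI) (simp add: lookup_tensor_ops_tens lookup_sum lookup_tens[OF vs])

lemma lookup_tensor_ops_nested_tens:
  "lookup (tensor_ops scale nu mu j (tensor_ops scale nu mu l (tens scale p x) (tens scale q y)) (tens scale s z)) h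
     = (\<Sum>i\<in>UNIV. \<Sum>k\<in>UNIV. scale (lookup (nu i (nu k p q) s) h) (mu (i, j) (mu (k, l) x y) z))"
  (is "?lhs = _")
proof -
  have "?lhs = (\<Sum>k\<in>UNIV. \<Sum>i\<in>UNIV. scale (lookup (nu i (nu k p q) s) h) (mu (i, j) (mu (k, l) x y) z))"
    by (simp add: tensor_ops_tens bilinear_op_sum_left[OF bilinear_op_tensor_ops[OF vs bil_mu]]
        lookup_sum lookup_tens[OF vs])
  also have "\<dots> = (\<Sum>i\<in>UNIV. \<Sum>k\<in>UNIV. scale (lookup (nu i (nu k p q) s) h) (mu (i, j) (mu (k, l) x y) z))"
    by (rule sum.swap)
  finally show ?thesis .
qed

lemma lookup_tree_eval_tensor_ops_tens:
  "lookup (tree_eval (tensor_ops scale nu mu) j l c (tens scale p1 x1) (tens scale p2 x2) (tens scale p3 x3)) h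
     = (\<Sum>i\<in>UNIV. \<Sum>k\<in>UNIV. scale (tree_coord nu p1 p2 p3 h i k c) (tree_eval mu (i, j) (k, l) c x1 x2 x3))"
  by (cases c) (simp_all only: tree_eval.simps tree_coord_def lookup_tensor_ops_nested_tens)

lemma lookup_eval3_tensor_ops_tens:
  "lookup (eval3 (tensor_scale scale) (tensor_ops scale nu mu) s (tens scale p1 x1) (tens scale p2 x2) (tens scale p3 x3)) h
     = eval3 scale mu (black_prod (tree_coord nu p1 p2 p3 h) s) x1 x2 x3"
  (is "?lhs = ?rhs")
proof -
  let ?t = "\<lambda>i j k l c. scale (tree_coord nu p1 p2 p3 h i k c * s j l c) (tree_eval mu (i, j) (k, l) c x1 x2 x3)"
  have "?rhs = (\<Sum>i\<in>UNIV. \<Sum>j\<in>UNIV. \<Sum>k\<in>UNIV. \<Sum>l\<in>UNIV. \<Sum>c\<in>shapes. ?t i j k l c)"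
    by (simp add: eval3_def sum_UNIV_prod black_prod_def)
  also have "\<dots> = (\<Sum>i\<in>UNIV. \<Sum>j\<in>UNIV. \<Sum>l\<in>UNIV. \<Sum>c\<in>shapes. \<Sum>k\<in>UNIV. ?t i j k l c)"
    by (rule sum.cong[OF refl], rule sum.cong[OF refl]) (rule sum_rotate3[symmetric])
  also have "\<dots> = (\<Sum>j\<in>UNIV. \<Sum>i\<in>UNIV. \<Sum>l\<in>UNIV. \<Sum>c\<in>shapes. \<Sum>k\<in>UNIV. ?t i j k l c)"
    by (rule sum.swap)
  also have "\<dots> = (\<Sum>j\<in>UNIV. \<Sum>l\<in>UNIV. \<Sum>c\<in>shapes. \<Sum>i\<in>UNIV. \<Sum>k\<in>UNIV. ?t i j k l c)"
    by (rule sum.cong[OF refl]) (rule sum_rotate3[symmetric])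
  also have "\<dots> = ?lhs"
    by (simp add: eval3_def lookup_sum lookup_tensor_scale[OF vs] lookup_tree_eval_tensor_ops_tens
        V.scale_sum_right V.scale_scale mult.commute)
  finally show ?thesis ..
qed

lemma tensor_ops_equivariant:
  assumes s2: "s2_module sigV"
    and mu_equivariant: "\<And>ij x y. (\<Sum>p\<in>UNIV. scale (black_gen sigV sigW p ij) (mu p x y)) = mu ij y x"
    and nu_equivariant: "\<And>i p q. (\<Sum>i'\<in>UNIV. fs_scale (dual_gen sigV i' i) (nu i' p q)) = nu i q p"
  shows "(\<Sum>j'\<in>UNIV. tensor_scale scale (sigW j' j) (tensor_ops scale nu mu j' T T')) = tensor_ops scale nu mu j T' T"
proof -
  note tensor_ops_rules = bilinear_op_add_left[OF bilinear_op_tensor_ops[OF vs bil_mu]]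
    bilinear_op_add_right[OF bilinear_op_tensor_ops[OF vs bil_mu]]
  define E where "E T T' = (\<Sum>j'\<in>UNIV. tensor_scale scale (sigW j' j) (tensor_ops scale nu mu j' T T'))
    - tensor_ops scale nu mu j T' T" for T T'
  have "E T T' = 0"
  proof (rule biadditive_eq_0_if_zero_on_singles[where f = E])
    show "E (x + x') y = E x y + E x' y" for x x' y
      by (simp add: E_def tensor_ops_rules TS.scale_right_distrib sum.distrib algebra_simps)
    show "E x (y + y') = E x y + E x y'" for x y y'
      by (simp add: E_def tensor_ops_rules TS.scale_right_distrib sum.distrib algebra_simps)
  next
    fix y1 y2 and a b :: 'a
    show "E (single y1 a) (single y2 b) = 0"
    proof (rule poly_mapping_eqI)
      fix h
      define al where "al i = lookup (nu i (unit_vec y1) (unit_vec y2)) h" for i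
      have "lookup (nu i (unit_vec y2) (unit_vec y1)) h = (\<Sum>i'\<in>UNIV. dual_gen sigV i' i * al i')" for i
        by (simp add: nu_equivariant[of i "unit_vec y1" "unit_vec y2", symmetric] lookup_sum al_def)
      then show "lookup (E (single y1 a) (single y2 b)) h = lookup 0 h"
        using black_gen_dual_gen_exchange[OF vs s2, of sigW j al "\<lambda>p. mu p a b"]
        by (simp add: E_def tens_unit_vec[OF vs, symmetric] lookup_minus lookup_sum
            lookup_tensor_scale[OF vs] lookup_tensor_ops_tens mu_equivariant al_def)
    qed
  qed
  then show ?thesis by (simp add: E_def)
qed

lemma tensor_ops_relations:
  assumes "lin_subspace R" and "is_algebra fs_scale (dual_gen sigV) (orth R) nu"
    and mu_relations: "\<And>\<rho> x1 x2 x3. \<rho> \<in> black_rel R S \<Longrightarrow> eval3 scale mu \<rho> x1 x2 x3 = 0"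
    and "s \<in> S"
  shows "eval3 (tensor_scale scale) (tensor_ops scale nu mu) s T1 T2 T3 = 0"
  using vector_space_tensor_scale[OF vs]
proof (rule eval3_eq_0_if_zero_on_singles)
  show "\<forall>j. bilinear_op (tensor_scale scale) (tensor_ops scale nu mu j)"
    using bilinear_op_tensor_ops[OF vs bil_mu] by blast
next
  fix y1 y2 y3 and b1 b2 b3 :: 'a
  show "eval3 (tensor_scale scale) (tensor_ops scale nu mu) s (single y1 b1) (single y2 b2) (single y3 b3) = 0"
  proof (rule poly_mapping_eqI)
    fix h
    have "black_prod (tree_coord nu (unit_vec y1) (unit_vec y2) (unit_vec y3) h) s \<in> black_rel R S"
      using tree_coord_in_rel[OF assms(1,2)] \<open>s \<in> S\<close> by (rule black_prod_in_black_rel)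
    then show "lookup (eval3 (tensor_scale scale) (tensor_ops scale nu mu) s (single y1 b1) (single y2 b2) (single y3 b3)) h
        = lookup 0 h"
      using lookup_eval3_tensor_ops_tens[of s "unit_vec y1" b1 "unit_vec y2" b2 "unit_vec y3" b3 h]
      by (simp add: tens_unit_vec[OF vs] mu_relations)
  qed
qed

end

lemma tensor_algebra_if_black_algebra:
  fixes nu :: "'i::finite \<Rightarrow> ('y \<Rightarrow>\<^sub>0 'k::field) \<Rightarrow> ('y \<Rightarrow>\<^sub>0 'k) \<Rightarrow> ('y \<Rightarrow>\<^sub>0 'k)"
    and mu :: "'i \<times> 'j::finite \<Rightarrow> 'a::ab_group_add \<Rightarrow> 'a \<Rightarrow> 'a"
  assumes "bin_quad_operad sigV R" and vs: "vector_space scale"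
    and mu_alg: "is_algebra scale (black_gen sigV sigW) (black_rel R S) mu"
    and nu_alg: "is_algebra fs_scale (dual_gen sigV) (orth R) nu"
  shows "is_algebra (tensor_scale scale) sigW S (tensor_ops scale nu mu)"
proof -
  have s2: "s2_module sigV" and lin: "lin_subspace R"
    using assms(1) by (simp_all add: bin_quad_operad_def)
  have bil_mu: "\<forall>ij. bilinear_op scale (mu ij)"
    and mu_equivariant: "\<And>ij x y. (\<Sum>p\<in>UNIV. scale (black_gen sigV sigW p ij) (mu p x y)) = mu ij y x"
    and mu_relations: "\<And>\<rho> x1 x2 x3. \<rho> \<in> black_rel R S \<Longrightarrow> eval3 scale mu \<rho> x1 x2 x3 = 0"
    using mu_alg unfolding is_algebra_def by blast+
  have bil_nu: "\<forall>i. bilinear_op fs_scale (nu i)"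
    and nu_equivariant: "\<And>i p q. (\<Sum>i'\<in>UNIV. fs_scale (dual_gen sigV i' i) (nu i' p q)) = nu i q p"
    using nu_alg unfolding is_algebra_def by blast+
  show ?thesis
    unfolding is_algebra_def
    using bilinear_op_tensor_ops[OF vs bil_mu]
      tensor_ops_equivariant[OF vs bil_mu bil_nu s2 mu_equivariant nu_equivariant]
      tensor_ops_relations[OF vs bil_mu bil_nu lin nu_alg mu_relations]
    by blast
qed

section \<open>A probe algebra over the Koszul dual operad\<close>

definition perm3 :: "nat \<Rightarrow> nat \<Rightarrow> nat \<Rightarrow> bool" where
  "perm3 a b c \<longleftrightarrow> a < 3 \<and> b < 3 \<and> c < 3 \<and> a \<noteq> b \<and> b \<noteq> c \<and> a \<noteq> c"

lemma perm3_rotate: "perm3 a b c \<Longrightarrow> perm3 b c a"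
  unfolding perm3_def by auto

lemma perm3_swap: "perm3 a b c \<Longrightarrow> perm3 b a c"
  unfolding perm3_def by auto

lemma perm3_induct [consumes 1, case_names identity rotate swap]:
  assumes "perm3 a b c"
    and "P 0 1 2" and rotate: "\<And>a b c. P a b c \<Longrightarrow> P b c a" and swap: "\<And>a b c. P a b c \<Longrightarrow> P b a c"
  shows "P a b c"
proof -
  have "P 1 2 0" "P 2 0 1" "P 1 0 2" "P 0 2 1" "P 2 1 0"
    using rotate swap \<open>P 0 1 2\<close> by blast+
  moreover have "(a, b, c) \<in> {(0, 1, 2), (1, 2, 0), (2, 0, 1), (1, 0, 2), (0, 2, 1), (2, 1, 0)}"
    using \<open>perm3 a b c\<close> unfolding perm3_def
    by (cases a; cases b; cases c) (auto simp: less_Suc_eq numeral_3_eq_3 numeral_2_eq_2)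
  ultimately show ?thesis using \<open>P 0 1 2\<close> by auto
qed

text \<open>The basis of the probe algebra B_r: generators x_a = Gen a (a < 3), quadratic monomials
  e_k(x_a, x_b) = Quad k a b (a < b) and a top element. Products of basis elements are
  arranged so that each tree monomial evaluated at (x_0, x_1, x_2) is its r-coefficient
  times Top, see tree_eval_probe_generators; all products not forced by this vanish.\<close>

datatype 'i probe_basis = Gen nat | Quad 'i nat nat | Top

instance probe_basis :: (countable) countable
  by countable_datatype

definition probe_vec :: "'i::countable probe_basis \<Rightarrow> (nat \<Rightarrow>\<^sub>0 'k::field)" where
  "probe_vec b = unit_vec (to_nat b)"

lemma lookup_probe_vec [simp]: "lookup (probe_vec b) (to_nat b') = (if b = b' then 1 else 0)"
  by (simp add: probe_vec_def lookup_single)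

text \<open>The coefficient for the triple (0, 2, 1) is twisted by D because in B_r the product
  e_k(x_2, x_0) equals \<Sum>_k' D k' k e_k'(x_0, x_2).\<close>

definition probe_coeff :: "('i::finite \<Rightarrow> 'i \<Rightarrow> 'k::field) \<Rightarrow> ('i, 'k) tree3 \<Rightarrow> 'i \<Rightarrow> 'i \<Rightarrow> nat \<Rightarrow> nat \<Rightarrow> nat \<Rightarrow> 'k" where
  "probe_coeff D r i k a b c =
    (if (a, b, c) = (0, 1, 2) then r i k Sh1
     else if (a, b, c) = (1, 2, 0) then r i k Sh2
     else if (a, b, c) = (0, 2, 1) then (\<Sum>k'\<in>UNIV. D k' k * r i k' Sh3)
     else 0)"

lemma probe_coeff_eq_0: "\<not> perm3 a b c \<Longrightarrow> probe_coeff D r i k a b c = 0"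
  by (auto simp: probe_coeff_def perm3_def)

definition probe_mult :: "('i::finite \<Rightarrow> 'i \<Rightarrow> 'k::field) \<Rightarrow> ('i, 'k) tree3 \<Rightarrow> 'i
    \<Rightarrow> 'i probe_basis \<Rightarrow> 'i probe_basis \<Rightarrow> (nat \<Rightarrow>\<^sub>0 'k)" where
  "probe_mult D r i b1 b2 = (case (b1, b2) of
      (Gen a, Gen b) \<Rightarrow>
        if a < b \<and> b < 3 then probe_vec (Quad i a b)
        else if b < a \<and> a < 3 then (\<Sum>k\<in>UNIV. fs_scale (D k i) (probe_vec (Quad k b a)))
        else 0
    | (Quad k a b, Gen c) \<Rightarrow> fs_scale (probe_coeff D r i k a b c) (probe_vec (Top :: 'i probe_basis))
    | (Gen c, Quad k a b) \<Rightarrow> (\<Sum>i'\<in>UNIV. fs_scale (D i' i * probe_coeff D r i' k a b c) (probe_vec (Top :: 'i probe_basis)))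
    | _ \<Rightarrow> 0)"

lemma probe_mult_simps [simp]:
  fixes D :: "'i::finite \<Rightarrow> 'i \<Rightarrow> 'k::field"
  shows "probe_mult D r k (Gen a) (Gen b) =
     (if a < b \<and> b < 3 then probe_vec (Quad k a b)
      else if b < a \<and> a < 3 then (\<Sum>k'\<in>UNIV. fs_scale (D k' k) (probe_vec (Quad k' b a))) else 0)"
  "probe_mult D r i (Quad k a b) (Gen c) = fs_scale (probe_coeff D r i k a b c) (probe_vec (Top :: 'i probe_basis))"
  "probe_mult D r i (Gen c) (Quad k a b) =
     (\<Sum>i'\<in>UNIV. fs_scale (D i' i * probe_coeff D r i' k a b c) (probe_vec (Top :: 'i probe_basis)))"
  "probe_mult D r i (Quad k a b) (Quad k' a' b') = 0"
  "probe_mult D r i Top x = 0"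
  "probe_mult D r i x Top = 0"
  by (simp_all add: probe_mult_def split: probe_basis.split)

text \<open>B_r lives on nat \<Rightarrow>_0 'k through the encoding to_nat; the basis vectors outside
  its range annihilate everything.\<close>

definition probe_ops :: "('i::finite \<Rightarrow> 'i \<Rightarrow> 'k::field) \<Rightarrow> ('i, 'k) tree3 \<Rightarrow> 'i
    \<Rightarrow> (nat \<Rightarrow>\<^sub>0 'k) \<Rightarrow> (nat \<Rightarrow>\<^sub>0 'k) \<Rightarrow> (nat \<Rightarrow>\<^sub>0 'k)" where
  "probe_ops D r i = bilinear_ext (\<lambda>y1 y2.
     if y1 \<in> range (to_nat :: 'i probe_basis \<Rightarrow> nat) \<and> y2 \<in> range (to_nat :: 'i probe_basis \<Rightarrow> nat) then probe_mult D r i (from_nat y1) (from_nat y2) else 0)"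

lemma bilinear_op_probe_ops: "bilinear_op fs_scale (probe_ops D r i)"
  unfolding probe_ops_def by (rule bilinear_op_bilinear_ext)

lemma probe_ops_probe_vec [simp]: "probe_ops D r i (probe_vec b1) (probe_vec b2) = probe_mult D r i b1 b2"
  by (simp add: probe_ops_def probe_vec_def)

lemma probe_ops_unit_vec_outside:
  fixes D :: "'i::finite \<Rightarrow> 'i \<Rightarrow> 'k::field"
  assumes "y \<notin> range (to_nat :: 'i::finite probe_basis \<Rightarrow> nat)"
  shows "probe_ops D r i (unit_vec y) x = 0" and "probe_ops D r i x (unit_vec y) = 0"
  using assms by (simp_all add: probe_ops_def bilinear_ext_def keys_single)

definition involutive :: "('i::finite \<Rightarrow> 'i \<Rightarrow> 'k::field) \<Rightarrow> bool" where
  "involutive D \<longleftrightarrow> (\<forall>a c. (\<Sum>b\<in>UNIV. D a b * D b c) = (if a = c then 1 else 0))"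

lemma involutive_dual_gen: "s2_module sig \<Longrightarrow> involutive (dual_gen sig)"
  unfolding involutive_def s2_module_def dual_gen_def by (simp add: mult.commute eq_commute)

lemma involutive_sum_fs_scale:
  assumes "involutive D"
  shows "(\<Sum>i'\<in>UNIV. fs_scale (D i' i) (\<Sum>k\<in>UNIV. fs_scale (D k i') (X k))) = X i"
proof -
  have "(\<Sum>i'\<in>UNIV. fs_scale (D i' i) (\<Sum>k\<in>UNIV. fs_scale (D k i') (X k)))
      = (\<Sum>k\<in>UNIV. fs_scale (\<Sum>i'\<in>UNIV. D k i' * D i' i) (X k))"
    by (simp only: FS.scale_sum_right FS.scale_scale FS.scale_sum_left, subst sum.swap)
      (simp only: mult.commute)
  also have "\<dots> = X i"
    using assms by (simp add: involutive_def if_distrib[of "\<lambda>c. fs_scale c _"] cong: if_cong)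
  finally show ?thesis .
qed

lemma probe_mult_equivariant:
  assumes inv: "involutive D"
  shows "(\<Sum>i'\<in>UNIV. fs_scale (D i' i) (probe_mult D r i' b1 b2)) = probe_mult D r i b2 b1"
proof (cases b1)
  case (Gen a)
  show ?thesis
  proof (cases b2)
    case (Gen b)
    then show ?thesis
      using \<open>b1 = Gen a\<close> involutive_sum_fs_scale[OF inv, where X = "\<lambda>k. probe_vec (Quad k b a)"] by auto
  next
    case (Quad k a' b')
    then show ?thesis
      using \<open>b1 = Gen a\<close> involutive_sum_fs_scale[OF inv, where X = "\<lambda>i'. fs_scale (probe_coeff D r i' k a' b' a) (probe_vec Top)"]
      by (simp add: FS.scale_scale)
  qed (simp add: \<open>b1 = Gen a\<close>)
next
  case (Quad k a b)
  then show ?thesis by (cases b2) (simp_all add: FS.scale_sum_right FS.scale_scale)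
next
  case Top
  then show ?thesis by simp
qed

lemma probe_ops_equivariant:
  assumes inv: "involutive D"
  shows "(\<Sum>i'\<in>UNIV. fs_scale (D i' i) (probe_ops D r i' p q)) = probe_ops D r i q p"
  unfolding probe_ops_def
  by (rule bilinear_ext_equivariant) (auto simp: probe_mult_equivariant[OF inv])

lemma tree_eval_probe_generators:
  fixes D :: "'i::finite \<Rightarrow> 'i \<Rightarrow> 'k::field"
  assumes inv: "involutive D"
  shows "tree_eval (probe_ops D r) i k c
      (probe_vec (Gen 0 :: 'i probe_basis)) (probe_vec (Gen 1 :: 'i probe_basis)) (probe_vec (Gen 2 :: 'i probe_basis))
    = fs_scale (r i k c) (probe_vec (Top :: 'i probe_basis))"
proof (cases c)
  case Sh3
  note bil = bilinear_op_probe_ops[of D r i]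
  have "tree_eval (probe_ops D r) i k Sh3
      (probe_vec (Gen 0 :: 'i probe_basis)) (probe_vec (Gen 1 :: 'i probe_basis)) (probe_vec (Gen 2 :: 'i probe_basis))
      = (\<Sum>k'\<in>UNIV. fs_scale (D k' k) (fs_scale (\<Sum>k''\<in>UNIV. D k'' k' * r i k'' Sh3) (probe_vec (Top :: 'i probe_basis))))"
    by (simp add: bilinear_op_sum_left[OF bil] bilinear_op_scale_left[OF bil] probe_coeff_def)
  also have "\<dots> = fs_scale (\<Sum>k''\<in>UNIV. (\<Sum>k'\<in>UNIV. D k'' k' * D k' k) * r i k'' Sh3) (probe_vec (Top :: 'i probe_basis))"
    by (simp add: FS.scale_scale FS.scale_sum_left[symmetric] sum_distrib_left sum_distrib_right mult_ac)
      (subst sum.swap, simp add: mult_ac)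
  also have "\<dots> = fs_scale (r i k Sh3) (probe_vec (Top :: 'i probe_basis))"
    using inv by (simp add: involutive_def if_distrib[of "\<lambda>x. x * _"] cong: if_cong)
  finally show ?thesis using Sh3 by simp
qed (simp_all add: probe_coeff_def)

definition gen_perm3 :: "'i probe_basis \<Rightarrow> 'i probe_basis \<Rightarrow> 'i probe_basis \<Rightarrow> bool" where
  "gen_perm3 A B C \<longleftrightarrow> (\<exists>a b c. A = Gen a \<and> B = Gen b \<and> C = Gen c \<and> perm3 a b c)"

lemma probe_ops_nested_eq_0:
  fixes D :: "'i::finite \<Rightarrow> 'i \<Rightarrow> 'k::field" and A B C :: "'i probe_basis"
  assumes "\<not> gen_perm3 A B C"
  shows "probe_ops D r i (probe_ops D r k (probe_vec A) (probe_vec B)) (probe_vec C) = 0"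
proof -
  note bil = bilinear_op_probe_ops[of D r i]
  note simps = bilinear_op_sum_left[OF bil] bilinear_op_scale_left[OF bil] bilinear_op_zero_left[OF bil]
  have no_perm: "probe_coeff D r i' k' a b c = 0" if "A = Gen a \<or> A = Gen b" "B = Gen b \<or> B = Gen a" "C = Gen c" "A \<noteq> B"
    for i' k' a b c
    using assms that by (intro probe_coeff_eq_0) (auto simp: gen_perm3_def dest: perm3_swap)
  show ?thesis
  proof (cases A)
    case (Gen a)
    show ?thesis
    proof (cases B)
      case (Gen b)
      show ?thesis
      proof (cases C)
        case (Gen c)
        then show ?thesis
          using \<open>A = Gen a\<close> \<open>B = Gen b\<close> no_perm[of a b c] no_perm[of b a c] by (auto simp: simps)
      qed (use \<open>A = Gen a\<close> \<open>B = Gen b\<close> in \<open>auto simp: simps\<close>)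
    qed (use \<open>A = Gen a\<close> in \<open>simp_all add: simps\<close>)
  next
    case (Quad k' a b)
    then show ?thesis by (cases B) (simp_all add: simps)
  qed (simp add: simps)
qed

lemma gen_perm3_rotate: "gen_perm3 A B C \<Longrightarrow> gen_perm3 B C A"
  unfolding gen_perm3_def using perm3_rotate by blast

lemma tree_eval_probe_eq_0:
  fixes D :: "'i::finite \<Rightarrow> 'i \<Rightarrow> 'k::field" and A B C :: "'i probe_basis"
  assumes "\<not> gen_perm3 A B C"
  shows "tree_eval (probe_ops D r) i k c (probe_vec A) (probe_vec B) (probe_vec C) = 0"
proof -
  have "\<not> gen_perm3 B C A" "\<not> gen_perm3 C A B"
    using assms gen_perm3_rotate[of B C A] gen_perm3_rotate[of C A B] by blast+
  then show ?thesis
    using assms by (cases c) (simp_all only: tree_eval.simps probe_ops_nested_eq_0 not_False_eq_True)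
qed

lemma tree_eval_eq_0_if_annihilated:
  assumes "\<forall>i. bilinear_op scale (m i)" and "\<And>i x. m i z x = 0" and "\<And>i x. m i x z = 0"
    and "z \<in> {x1, x2, x3}"
  shows "tree_eval m i k c x1 x2 x3 = 0"
  using assms(2-4) by (cases c) (auto simp: bilinear_op_zero_left[OF assms(1)[rule_format]])

lemma eval3_probe_generators:
  fixes D :: "'i::finite \<Rightarrow> 'i \<Rightarrow> 'k::field"
  assumes "involutive D"
  shows "eval3 fs_scale (probe_ops D r) u
      (probe_vec (Gen 0 :: 'i probe_basis)) (probe_vec (Gen 1 :: 'i probe_basis)) (probe_vec (Gen 2 :: 'i probe_basis))
    = fs_scale (tree3_pairing u r) (probe_vec (Top :: 'i probe_basis))"
  unfolding eval3_def tree_eval_probe_generators[OF assms]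
  by (simp only: FS.scale_scale FS.scale_sum_left tree3_pairing_def)

lemma probe_relations_on_basis:
  fixes sigV :: "'i::finite \<Rightarrow> 'i \<Rightarrow> 'k::field" and A B C :: "'i probe_basis"
  assumes "bin_quad_operad sigV R" and "r \<in> R" and "u \<in> orth R"
  shows "eval3 fs_scale (probe_ops (dual_gen sigV) r) u (probe_vec A) (probe_vec B) (probe_vec C) = 0"
proof (cases "gen_perm3 A B C")
  case True
  then obtain a b c where ABC: "A = Gen a" "B = Gen b" "C = Gen c" and "perm3 a b c"
    by (auto simp: gen_perm3_def)
  define nu where "nu = probe_ops (dual_gen sigV) r"
  have inv: "involutive (dual_gen sigV)"
    using assms(1) by (simp add: bin_quad_operad_def involutive_dual_gen)
  have R_rot: "\<forall>r\<in>R. rot_act r \<in> R" and R_swap: "\<forall>r\<in>R. swap_act sigV r \<in> R"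
    using assms(1) by (simp_all add: bin_quad_operad_def)
  have bil: "\<forall>i. bilinear_op fs_scale (nu i)"
    by (simp add: nu_def bilinear_op_probe_ops)
  have equivariant: "nu k y x = (\<Sum>k'\<in>UNIV. fs_scale (dual_gen sigV k' k) (nu k' x y))" for k x y
    unfolding nu_def by (rule probe_ops_equivariant[OF inv, symmetric])
  have "\<forall>u\<in>orth R. eval3 fs_scale nu u
      (probe_vec (Gen a :: 'i probe_basis)) (probe_vec (Gen b :: 'i probe_basis)) (probe_vec (Gen c :: 'i probe_basis)) = 0"
    using \<open>perm3 a b c\<close>
  proof (induction rule: perm3_induct)
    case identity
    show ?case
      using assms(2) unfolding nu_def eval3_probe_generators[OF inv] by (simp add: orth_eq)
  next
    case (rotate a b c)
    then show ?case by (rule orth_vanishing_rotate[OF R_rot])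
  next
    case (swap a b c)
    then show ?case by (rule orth_vanishing_swap[OF vector_space_fs_scale bil equivariant R_swap])
  qed
  then show ?thesis using assms(3) by (simp add: ABC nu_def)
next
  case False
  then show ?thesis by (simp add: eval3_def tree_eval_probe_eq_0)
qed

lemma probe_relations:
  fixes sigV :: "'i::finite \<Rightarrow> 'i \<Rightarrow> 'k::field"
  assumes "bin_quad_operad sigV R" and "r \<in> R" and "u \<in> orth R"
  shows "eval3 fs_scale (probe_ops (dual_gen sigV) r) u p q s = 0"
proof (rule eval3_eq_0_if_zero_on_basis)
  show "\<forall>i. bilinear_op fs_scale (probe_ops (dual_gen sigV) r i)"
    by (simp add: bilinear_op_probe_ops)
next
  fix y1 y2 y3
  show "eval3 fs_scale (probe_ops (dual_gen sigV) r) u (unit_vec y1) (unit_vec y2) (unit_vec y3) = 0"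
  proof (cases "{y1, y2, y3} \<subseteq> range (to_nat :: 'i probe_basis \<Rightarrow> nat)")
    case True
    then obtain A B C :: "'i probe_basis" where "y1 = to_nat A" "y2 = to_nat B" "y3 = to_nat C"
      by auto
    then show ?thesis
      using probe_relations_on_basis[OF assms, of A B C] by (simp add: probe_vec_def)
  next
    case False
    then obtain y where y: "(unit_vec y :: nat \<Rightarrow>\<^sub>0 'k) \<in> {unit_vec y1, unit_vec y2, unit_vec y3}"
        and "y \<notin> range (to_nat :: 'i probe_basis \<Rightarrow> nat)"
      by auto
    then have "tree_eval (probe_ops (dual_gen sigV) r) i k c (unit_vec y1) (unit_vec y2) (unit_vec y3) = 0" for i k c
      by (intro tree_eval_eq_0_if_annihilated[of fs_scale _ "unit_vec y", OF _ _ _ y])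
        (simp_all add: bilinear_op_probe_ops probe_ops_unit_vec_outside)
    then show ?thesis by (simp add: eval3_def)
  qed
qed

lemma probe_is_algebra:
  fixes sigV :: "'i::finite \<Rightarrow> 'i \<Rightarrow> 'k::field"
  assumes "bin_quad_operad sigV R" and "r \<in> R"
  shows "is_algebra fs_scale (dual_gen sigV) (orth R) (probe_ops (dual_gen sigV) r)"
proof -
  have inv: "involutive (dual_gen sigV)"
    using assms(1) by (simp add: bin_quad_operad_def involutive_dual_gen)
  show ?thesis
    unfolding is_algebra_def
    using bilinear_op_probe_ops probe_ops_equivariant[OF inv] probe_relations[OF assms] by blast
qed

section \<open>From algebras over the tensor products to algebras over the black product\<close>

lemma involutive_cancel:
  fixes scale :: "'k::field \<Rightarrow> 'a::ab_group_add \<Rightarrow> 'a" and D :: "'i::finite \<Rightarrow> 'i \<Rightarrow> 'k"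
  assumes vs: "vector_space scale" and inv: "involutive D"
    and eq: "\<And>a. (\<Sum>b\<in>UNIV. scale (D a b) (X b)) = (\<Sum>b\<in>UNIV. scale (D a b) (Y b))"
  shows "X c = Y c"
proof -
  interpret V: vector_space scale by (rule vs)
  have inversion: "Z c = (\<Sum>a\<in>UNIV. scale (D c a) (\<Sum>b\<in>UNIV. scale (D a b) (Z b)))" for Z
  proof -
    have "(\<Sum>a\<in>UNIV. scale (D c a) (\<Sum>b\<in>UNIV. scale (D a b) (Z b)))
        = (\<Sum>b\<in>UNIV. scale (\<Sum>a\<in>UNIV. D c a * D a b) (Z b))"
      by (simp only: V.scale_sum_right V.scale_scale V.scale_sum_left) (rule sum.swap)
    also have "\<dots> = Z c"
      using inv by (simp add: involutive_def if_distrib[of "\<lambda>t. scale t _"] cong: if_cong)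
    finally show ?thesis ..
  qed
  have "X c = (\<Sum>a\<in>UNIV. scale (D c a) (\<Sum>b\<in>UNIV. scale (D a b) (X b)))"
    by (rule inversion)
  also have "\<dots> = (\<Sum>a\<in>UNIV. scale (D c a) (\<Sum>b\<in>UNIV. scale (D a b) (Y b)))"
    by (simp only: eq)
  finally show ?thesis
    using inversion[of Y] by simp
qed

lemma lin_subspace_eval3_kernel:
  assumes vs: "vector_space scale"
  shows "lin_subspace {\<rho>. \<forall>x1 x2 x3. eval3 scale m \<rho> x1 x2 x3 = 0}"
proof -
  interpret V: vector_space scale by (rule vs)
  have "eval3 scale m (\<lambda>i k c. \<rho> i k c + \<rho>' i k c) x1 x2 x3 = eval3 scale m \<rho> x1 x2 x3 + eval3 scale m \<rho>' x1 x2 x3"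
    and "eval3 scale m (\<lambda>i k c. a * \<rho> i k c) x1 x2 x3 = scale a (eval3 scale m \<rho> x1 x2 x3)"
    for \<rho> \<rho>' a x1 x2 x3
    by (simp_all add: eval3_def V.scale_left_distrib sum.distrib V.scale_sum_right)
  then show ?thesis
    by (simp add: lin_subspace_def eval3_def)
qed

lemma black_rel_subset:
  assumes "lin_subspace U" and "\<And>r s. r \<in> R \<Longrightarrow> s \<in> S \<Longrightarrow> black_prod r s \<in> U"
  shows "black_rel R S \<subseteq> U"
  using assms unfolding black_rel_def lin_span_def black_prod_def by blast

lemma tree_coord_probe_generators:
  fixes D :: "'i::finite \<Rightarrow> 'i \<Rightarrow> 'k::field"
  assumes "involutive D"
  shows "tree_coord (probe_ops D r) (probe_vec (Gen 0 :: 'i probe_basis)) (probe_vec (Gen 1 :: 'i probe_basis))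
    (probe_vec (Gen 2 :: 'i probe_basis)) (to_nat (Top :: 'i probe_basis)) = r"
  unfolding tree_coord_def tree_eval_probe_generators[OF assms] by (simp add: probe_vec_def lookup_single)

text \<open>In B_0 the product of x_0 and x_1 under the operation i has coordinate 1 at Quad a 0 1
  if i = a and 0 otherwise, so this coordinate of the Q-equivariance of B_0 \<otimes> A is the
  equivariance of A, up to the invertible matrix D.\<close>

lemma black_equivariant_if_tensor_probe:
  fixes sigV :: "'i::finite \<Rightarrow> 'i \<Rightarrow> 'k::field" and sigW :: "'j::finite \<Rightarrow> 'j \<Rightarrow> 'k"
    and scale :: "'k \<Rightarrow> 'a::ab_group_add \<Rightarrow> 'a" and mu :: "'i \<times> 'j \<Rightarrow> 'a \<Rightarrow> 'a \<Rightarrow> 'a"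
  assumes vs: "vector_space scale" and bil_mu: "\<forall>ij. bilinear_op scale (mu ij)" and s2: "s2_module sigV"
    and tensor: "is_algebra (tensor_scale scale) sigW S (tensor_ops scale (probe_ops (dual_gen sigV) (\<lambda>i k c. 0)) mu)"
  shows "(\<Sum>p\<in>UNIV. scale (black_gen sigV sigW p (i, j)) (mu p x y)) = mu (i, j) y x"
proof (rule involutive_cancel[OF vs involutive_dual_gen[OF s2]])
  define D where "D = dual_gen sigV"
  let ?nu = "probe_ops D (\<lambda>i k c. 0)"
  let ?T = "tens scale (probe_vec (Gen 0 :: 'i probe_basis)) x"
    and ?T' = "tens scale (probe_vec (Gen 1 :: 'i probe_basis)) y"
  have probe_bil: "\<forall>i. bilinear_op fs_scale (?nu i)"
    by (simp add: bilinear_op_probe_ops)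
  have eq: "(\<Sum>j'\<in>UNIV. tensor_scale scale (sigW j' j) (tensor_ops scale ?nu mu j' ?T ?T')) = tensor_ops scale ?nu mu j ?T' ?T"
    using tensor unfolding is_algebra_def D_def by blast
  fix a
  define h where "h = to_nat (Quad a 0 1 :: 'i probe_basis)"
  have "(\<Sum>b\<in>UNIV. scale (D a b) (\<Sum>p\<in>UNIV. scale (black_gen sigV sigW p (b, j)) (mu p x y)))
      = lookup (\<Sum>j'\<in>UNIV. tensor_scale scale (sigW j' j) (tensor_ops scale ?nu mu j' ?T ?T')) h"
    using black_gen_dual_gen_exchange[OF vs s2, of sigW j "\<lambda>i. if i = a then 1 else 0" "\<lambda>p. mu p x y", folded D_def]
    by (simp add: lookup_sum lookup_tensor_scale[OF vs] lookup_tensor_ops_tens[OF vs bil_mu probe_bil]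
        h_def if_distrib[of "\<lambda>t. scale t _"] if_distrib[of "\<lambda>t. _ * t"] cong: if_cong)
  also have "\<dots> = (\<Sum>b\<in>UNIV. scale (D a b) (mu (b, j) y x))"
    unfolding eq
    by (simp add: lookup_tensor_ops_tens[OF vs bil_mu probe_bil] h_def lookup_sum
        if_distrib[of "\<lambda>t. _ * t"] cong: if_cong)
  finally show "(\<Sum>b\<in>UNIV. scale (dual_gen sigV a b) (\<Sum>p\<in>UNIV. scale (black_gen sigV sigW p (b, j)) (mu p x y)))
      = (\<Sum>b\<in>UNIV. scale (dual_gen sigV a b) (mu (b, j) y x))"
    by (simp only: D_def)
qed

lemma black_prod_relation_if_tensor_probe:
  fixes sigV :: "'i::finite \<Rightarrow> 'i \<Rightarrow> 'k::field" and sigW :: "'j::finite \<Rightarrow> 'j \<Rightarrow> 'k"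
    and scale :: "'k \<Rightarrow> 'a::ab_group_add \<Rightarrow> 'a" and mu :: "'i \<times> 'j \<Rightarrow> 'a \<Rightarrow> 'a \<Rightarrow> 'a"
  assumes vs: "vector_space scale" and bil_mu: "\<forall>ij. bilinear_op scale (mu ij)" and s2: "s2_module sigV"
    and tensor: "is_algebra (tensor_scale scale) sigW S (tensor_ops scale (probe_ops (dual_gen sigV) r) mu)"
    and "s \<in> S"
  shows "eval3 scale mu (black_prod r s) x1 x2 x3 = 0"
proof -
  let ?nu = "probe_ops (dual_gen sigV) r"
  let ?G = "\<lambda>a. probe_vec (Gen a :: 'i probe_basis) :: nat \<Rightarrow>\<^sub>0 'k"
  have probe_bil: "\<forall>i. bilinear_op fs_scale (?nu i)"
    by (simp add: bilinear_op_probe_ops)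
  have "eval3 scale mu (black_prod r s) x1 x2 x3
      = eval3 scale mu (black_prod (tree_coord ?nu (?G 0) (?G 1) (?G 2) (to_nat (Top :: 'i probe_basis))) s) x1 x2 x3"
    by (simp only: tree_coord_probe_generators[OF involutive_dual_gen[OF s2]])
  also have "\<dots> = lookup (eval3 (tensor_scale scale) (tensor_ops scale ?nu mu) s
      (tens scale (?G 0) x1) (tens scale (?G 1) x2) (tens scale (?G 2) x3)) (to_nat (Top :: 'i probe_basis))"
    by (rule lookup_eval3_tensor_ops_tens[OF vs bil_mu probe_bil, symmetric])
  also have "\<dots> = 0"
    using tensor \<open>s \<in> S\<close> unfolding is_algebra_def by simp
  finally show ?thesis .
qed

lemma black_algebra_if_tensor_algebras:
  fixes sigV :: "'i::finite \<Rightarrow> 'i \<Rightarrow> 'k::field" and sigW :: "'j::finite \<Rightarrow> 'j \<Rightarrow> 'k"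
    and scale :: "'k \<Rightarrow> 'a::ab_group_add \<Rightarrow> 'a" and mu :: "'i \<times> 'j \<Rightarrow> 'a \<Rightarrow> 'a \<Rightarrow> 'a"
  assumes operad: "bin_quad_operad sigV R" and vs: "vector_space scale"
    and bil_mu: "\<forall>ij. bilinear_op scale (mu ij)"
    and tensor: "\<And>nu :: 'i \<Rightarrow> (nat \<Rightarrow>\<^sub>0 'k) \<Rightarrow> (nat \<Rightarrow>\<^sub>0 'k) \<Rightarrow> (nat \<Rightarrow>\<^sub>0 'k).
      is_algebra fs_scale (dual_gen sigV) (orth R) nu \<Longrightarrow> is_algebra (tensor_scale scale) sigW S (tensor_ops scale nu mu)"
  shows "is_algebra scale (black_gen sigV sigW) (black_rel R S) mu"
proof -
  have s2: "s2_module sigV" and lin: "lin_subspace R"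
    using operad by (simp_all add: bin_quad_operad_def)
  have probe_tensor: "is_algebra (tensor_scale scale) sigW S (tensor_ops scale (probe_ops (dual_gen sigV) r) mu)"
    if "r \<in> R" for r
    using probe_is_algebra[OF operad that] by (rule tensor)
  have "(\<lambda>i k c. 0) \<in> R" using lin by (simp add: lin_subspace_def)
  note mu_equivariant = black_equivariant_if_tensor_probe[OF vs bil_mu s2 probe_tensor[OF this]]
  have "black_rel R S \<subseteq> {\<rho>. \<forall>x1 x2 x3. eval3 scale mu \<rho> x1 x2 x3 = 0}"
    using black_prod_relation_if_tensor_probe[OF vs bil_mu s2 probe_tensor]
    by (intro black_rel_subset lin_subspace_eval3_kernel[OF vs]) blast
  then show ?thesis
    unfolding is_algebra_def using bil_mu mu_equivariant by auto
qed

theorem mainTheorem3: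
  fixes sigV :: "'i::finite \<Rightarrow> 'i \<Rightarrow> 'k::field" and R :: "('i, 'k) tree3 set"
    and sigW :: "'j::finite \<Rightarrow> 'j \<Rightarrow> 'k" and S :: "('j, 'k) tree3 set"
    and scale :: "'k \<Rightarrow> 'a::ab_group_add \<Rightarrow> 'a"
    and mu :: "'i \<times> 'j \<Rightarrow> 'a \<Rightarrow> 'a \<Rightarrow> 'a"
  assumes "bin_quad_operad sigV R" and "bin_quad_operad sigW S"
    and "vector_space scale"
    and "\<forall>ij. bilinear_op scale (mu ij)"
  shows "(is_algebra scale (black_gen sigV sigW) (black_rel R S) mu \<longleftrightarrow>
            (\<forall>nu :: 'i \<Rightarrow> (nat \<Rightarrow>\<^sub>0 'k) \<Rightarrow> (nat \<Rightarrow>\<^sub>0 'k) \<Rightarrow> (nat \<Rightarrow>\<^sub>0 'k).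
               is_algebra fs_scale (dual_gen sigV) (orth R) nu \<longrightarrow>
               is_algebra (tensor_scale scale) sigW S (tensor_ops scale nu mu)))
       \<and> (is_algebra scale (black_gen sigV sigW) (black_rel R S) mu \<longrightarrow>
            (\<forall>nu :: 'i \<Rightarrow> ('y \<Rightarrow>\<^sub>0 'k) \<Rightarrow> ('y \<Rightarrow>\<^sub>0 'k) \<Rightarrow> ('y \<Rightarrow>\<^sub>0 'k).
               is_algebra fs_scale (dual_gen sigV) (orth R) nu \<longrightarrow>
               is_algebra (tensor_scale scale) sigW S (tensor_ops scale nu mu)))"
proof (intro conjI iffI allI impI)
  fix nu :: "'i \<Rightarrow> (nat \<Rightarrow>\<^sub>0 'k) \<Rightarrow> (nat \<Rightarrow>\<^sub>0 'k) \<Rightarrow> (nat \<Rightarrow>\<^sub>0 'k)"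
  assume "is_algebra scale (black_gen sigV sigW) (black_rel R S) mu"
    and "is_algebra fs_scale (dual_gen sigV) (orth R) nu"
  then show "is_algebra (tensor_scale scale) sigW S (tensor_ops scale nu mu)"
    by (rule tensor_algebra_if_black_algebra[OF assms(1,3)])
next
  assume "\<forall>nu :: 'i \<Rightarrow> (nat \<Rightarrow>\<^sub>0 'k) \<Rightarrow> (nat \<Rightarrow>\<^sub>0 'k) \<Rightarrow> (nat \<Rightarrow>\<^sub>0 'k).
    is_algebra fs_scale (dual_gen sigV) (orth R) nu \<longrightarrow> is_algebra (tensor_scale scale) sigW S (tensor_ops scale nu mu)"
  then show "is_algebra scale (black_gen sigV sigW) (black_rel R S) mu"
    by (intro black_algebra_if_tensor_algebras[OF assms(1,3,4)]) blast
next
  fix nu :: "'i \<Rightarrow> ('y \<Rightarrow>\<^sub>0 'k) \<Rightarrow> ('y \<Rightarrow>\<^sub>0 'k) \<Rightarrow> ('y \<Rightarrow>\<^sub>0 'k)"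
  assume "is_algebra scale (black_gen sigV sigW) (black_rel R S) mu"
    and "is_algebra fs_scale (dual_gen sigV) (orth R) nu"
  then show "is_algebra (tensor_scale scale) sigW S (tensor_ops scale nu mu)"
    by (rule tensor_algebra_if_black_algebra[OF assms(1,3)])
qed

end
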